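(* Let $(\mathbf X,\mathbf Y)$ be a general correlated source which is uniformly integrable. Then $R_{SW}(\mathbf X|\mathbf Y)=\overline H_s(\mathbf X|\mathbf Y)$.
   Context: A general correlated source $(\mathbf X,\mathbf Y)=\{(X^n,Y^n)\}_{n\ge1}$ is an arbitrary sequence of pairs of random variables, $(X^n,Y^n)$ on $\mathcal X^n\times\mathcal Y^n$ with $\mathcal X,\mathcal Y$ finite or countably infinite, joint distribution $P_{X^nY^n}$ (no structural assumptions; all marginal probabilities positive). Logs base 2. Uniform integrability: a sequence $\{Z_n\}$ of discrete real random variables is uniformly integrable if $\lim_{u\to\infty}\sup_{n}\sum_{z:|z|\ge u}P_{Z_n}(z)|z|=0$; the source is called uniformly integrable if $\{\frac1n\log\frac1{P_{X^n|Y^n}(X^n|Y^n)}\}_n$ is. For $x^n\in\mathcal X^n$ and $\varepsilon\in(0,1]$, $\overline h^\varepsilon(x^n)=\inf\{a\in\mathbb R:\sum_{y^n:\log(1/P_{X^n|Y^n}(x^n|y^n))>a}P_{Y^n|X^n}(y^n|x^n)\le\varepsilon\}$; $\overline H_s^\varepsilon(X^n|Y^n)=\sum_{x^n}P_{X^n}(x^n)\overline h^\varepsilon(x^n)$; $\overline H_s(\mathbf X|\mathbf Y)=\lim_{\varepsilon\downarrow0}\limsup_n\frac1n\overline H_s^\varepsilon(X^n|Y^n)$. Slepian–Wolf (SW) code of blocklength $n$: $(\varphi_n,\psi_n)$ with encoder $\varphi_n:\mathcal X^n\to\{0,1\}^*$ whose set of codewords is prefix-free and decoder $\psi_n:\{0,1\}^*\times\mathcal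 Y^n\to\mathcal X^n$; error probability $\Pr\{\psi_n(\varphi_n(X^n),Y^n)\ne X^n\}$; $\ell_n(x^n)$ the length of $\varphi_n(x^n)$. A rate $R$ is weakly lossless achievable if there are SW codes with error probability $\to0$ and $\limsup_n\frac1n\mathbb E[\ell_n(X^n)]\le R$; $R_{SW}(\mathbf X|\mathbf Y)$ is the infimum of such rates. *)

theory Defs
  imports "HOL-Probability.Probability" "HOL-Library.Sublist"
begin

text \<open>A general correlated source over countable alphabets (the types 'a and 'b):
  for every blocklength n a joint pmf P n of (X^n, Y^n) on lists of length n.
  The value at n = 0 is irrelevant.\<close>

definition general_source :: "(nat \<Rightarrow> ('a::countable list \<times> 'b::countable list) pmf) \<Rightarrow> bool" where
  "general_source P \<longleftrightarrow>
     (\<forall>n. set_pmf (P n) \<subseteq> {(x, y). length x = n \<and> length y = n}) \<and>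
     (\<forall>n x. length x = n \<longrightarrow> pmf (map_pmf fst (P n)) x > 0) \<and>
     (\<forall>n y. length y = n \<longrightarrow> pmf (map_pmf snd (P n)) y > 0)"

definition condXY :: "(nat \<Rightarrow> ('a list \<times> 'b list) pmf) \<Rightarrow> nat \<Rightarrow> 'a list \<Rightarrow> 'b list \<Rightarrow> real" where
  "condXY P n x y = pmf (P n) (x, y) / pmf (map_pmf snd (P n)) y"

definition condYX :: "(nat \<Rightarrow> ('a list \<times> 'b list) pmf) \<Rightarrow> nat \<Rightarrow> 'b list \<Rightarrow> 'a list \<Rightarrow> real" where
  "condYX P n y x = pmf (P n) (x, y) / pmf (map_pmf fst (P n)) x"

definition info_density :: "(nat \<Rightarrow> ('a list \<times> 'b list) pmf) \<Rightarrow> nat \<Rightarrow> 'a list \<times> 'b list \<Rightarrow> real" where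
  "info_density P n xy = (1 / real n) * log 2 (1 / condXY P n (fst xy) (snd xy))"

definition uniformly_integrable_seq :: "(nat \<Rightarrow> real pmf) \<Rightarrow> bool" where
  "uniformly_integrable_seq Z \<longleftrightarrow>
     ((\<lambda>u::real. SUP n\<in>{1..}. \<integral>\<^sup>+ z. ennreal (pmf (Z n) z * \<bar>z\<bar>) \<partial>count_space {z. \<bar>z\<bar> \<ge> u})
        \<longlongrightarrow> 0) at_top"

definition uniformly_integrable_source :: "(nat \<Rightarrow> ('a list \<times> 'b list) pmf) \<Rightarrow> bool" where
  "uniformly_integrable_source P \<longleftrightarrow>
     uniformly_integrable_seq (\<lambda>n. map_pmf (info_density P n) (P n))"

definition hbar :: "(nat \<Rightarrow> ('a list \<times> 'b list) pmf) \<Rightarrow> nat \<Rightarrow> real \<Rightarrow> 'a list \<Rightarrow> real" where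
  "hbar P n \<epsilon> x = Inf {a::real.
      (\<integral>\<^sup>+ y. ennreal (condYX P n y x)
         \<partial>count_space {y. log 2 (1 / condXY P n x y) > a}) \<le> ennreal \<epsilon>}"

text \<open>\bar H_s^\<epsilon>(X^n|Y^n) = \<Sum>_x P_{X^n}(x) \bar h^\<epsilon>(x) (nonnegative for \<epsilon> < 1,
  which is all that matters for the limit \<epsilon> \<down> 0).\<close>
definition Hs_eps :: "(nat \<Rightarrow> ('a list \<times> 'b list) pmf) \<Rightarrow> nat \<Rightarrow> real \<Rightarrow> ereal" where
  "Hs_eps P n \<epsilon> = enn2ereal (\<integral>\<^sup>+ x. ennreal (pmf (map_pmf fst (P n)) x * hbar P n \<epsilon> x)
                                 \<partial>count_space {x. length x = n})"

definition Hs_bar :: "(nat \<Rightarrow> ('a list \<times> 'b list) pmf) \<Rightarrow> ereal" where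
  "Hs_bar P = Lim (at_right 0) (\<lambda>\<epsilon>::real. limsup (\<lambda>n. ereal (1 / real n) * Hs_eps P n \<epsilon>))"

definition prefix_free :: "bool list set \<Rightarrow> bool" where
  "prefix_free C \<longleftrightarrow> (\<forall>u\<in>C. \<forall>v\<in>C. \<not> strict_prefix u v)"

definition SW_code :: "nat \<Rightarrow> ('a list \<Rightarrow> bool list) \<Rightarrow> bool" where
  "SW_code n \<phi> \<longleftrightarrow> prefix_free (\<phi> ` {x. length x = n})"

definition SW_error :: "(nat \<Rightarrow> ('a list \<times> 'b list) pmf) \<Rightarrow> nat \<Rightarrow> ('a list \<Rightarrow> bool list)
    \<Rightarrow> (bool list \<Rightarrow> 'b list \<Rightarrow> 'a list) \<Rightarrow> real" where
  "SW_error P n \<phi> \<psi> = measure_pmf.prob (P n) {(x, y). \<psi> (\<phi> x) y \<noteq> x}"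

definition SW_exp_length :: "(nat \<Rightarrow> ('a list \<times> 'b list) pmf) \<Rightarrow> nat \<Rightarrow> ('a list \<Rightarrow> bool list) \<Rightarrow> ereal" where
  "SW_exp_length P n \<phi> = enn2ereal (\<integral>\<^sup>+ xy. ennreal (real (length (\<phi> (fst xy)))) \<partial>measure_pmf (P n))"

definition weakly_achievable :: "(nat \<Rightarrow> ('a list \<times> 'b list) pmf) \<Rightarrow> real \<Rightarrow> bool" where
  "weakly_achievable P R \<longleftrightarrow>
     (\<exists>\<phi> \<psi>. (\<forall>n. SW_code n (\<phi> n)) \<and>
            (\<lambda>n. SW_error P n (\<phi> n) (\<psi> n)) \<longlonglongrightarrow> 0 \<and>
            limsup (\<lambda>n. ereal (1 / real n) * SW_exp_length P n (\<phi> n)) \<le> ereal R)"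

definition R_SW :: "(nat \<Rightarrow> ('a list \<times> 'b list) pmf) \<Rightarrow> ereal" where
  "R_SW P = Inf (ereal ` {R. weakly_achievable P R})"

end

theory Submission
  imports Defs "HOL-Real_Asymp.Real_Asymp"
begin

text \<open>Write \<open>W = log (1 / P(X|Y))\<close> for the conditional self-information.

  Converse: for a prefix code \<open>\<phi>\<close> with decoder \<open>\<psi>\<close>, Kraft's inequality shows that the pairs
  that are decoded correctly and have \<open>W > |\<phi> x| + c\<close> carry probability at most \<open>2\<^sup>-\<^sup>c\<close>. So outside
  a set of \<open>x\<close> of probability about \<open>(error + 2\<^sup>-\<^sup>c) / \<epsilon>\<close> the conditional tail of \<open>W\<close> beyond
  \<open>|\<phi> x| + c\<close> is at most \<open>\<epsilon>\<close>, i.e. \<open>hbar\<^sup>\<epsilon>(x) \<le> |\<phi> x| + c\<close>; on the exceptional set Markov's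
  inequality gives \<open>hbar\<^sup>\<epsilon>(x) \<le> E[W | X = x] / \<epsilon>\<close>, and uniform integrability makes the
  contribution of a set of vanishing probability \<open>o(n)\<close>.

  Achievability: send the level \<open>j = \<lceil>(hbar\<^sup>\<epsilon>(x) + 1) / t\<rceil>\<close> in unary, followed by a random bin
  of \<open>(j + 1) t\<close> bits, and decode to the \<open>x'\<close> of the same level and bin with \<open>P(x'|y) \<ge> 2\<^sup>-\<^sup>j\<^sup>t\<close>.
  By the definition of \<open>hbar\<close>, \<open>x\<close> itself qualifies except with probability \<open>\<epsilon>\<close>; since those
  \<open>x'\<close> have total conditional mass at most 1, a wrong one shares the bin with probability
  at most \<open>2\<^sup>-\<^sup>t\<close>. Taking \<open>t \<approx> \<gamma> n\<close> and letting \<open>\<epsilon> \<rightarrow> 0\<close> along a diagonal sequence gives every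
  rate above \<open>Hs_bar\<close>.\<close>

section \<open>Integrals over pairs and prefix-free codes\<close>

lemma nn_integral_count_space_prod:
  fixes f :: "('a::countable \<times> 'b::countable) \<Rightarrow> ennreal"
  shows "(\<integral>\<^sup>+ z. f z \<partial>count_space UNIV) =
    (\<integral>\<^sup>+ x. \<integral>\<^sup>+ y. f (x, y) \<partial>count_space UNIV \<partial>count_space UNIV)"
proof -
  interpret sigma_finite_measure "count_space (UNIV::'b set)"
    by (rule sigma_finite_measure_count_space_countable) simp
  have eq: "count_space (UNIV::'a set) \<Otimes>\<^sub>M count_space (UNIV::'b set) = count_space (UNIV \<times> UNIV)"
    by (rule pair_measure_countable) auto
  have "(\<integral>\<^sup>+ x. \<integral>\<^sup>+ y. f (x, y) \<partial>count_space UNIV \<partial>count_space UNIV) =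
      integral\<^sup>N (count_space (UNIV::'a set) \<Otimes>\<^sub>M count_space (UNIV::'b set)) f"
    by (rule nn_integral_fst) (simp add: eq)
  then show ?thesis by (simp add: eq)
qed

lemma nn_integral_measure_pmf_prod:
  fixes p :: "('a::countable \<times> 'b::countable) pmf"
  shows "(\<integral>\<^sup>+ z. g z \<partial>measure_pmf p) =
     (\<integral>\<^sup>+ x. \<integral>\<^sup>+ y. ennreal (pmf p (x, y)) * g (x, y) \<partial>count_space UNIV \<partial>count_space UNIV)"
  by (simp add: nn_integral_measure_pmf nn_integral_count_space_prod[of "\<lambda>z. ennreal (pmf p z) * g z"])

lemma nn_integral_measure_pmf_fst:
  "(\<integral>\<^sup>+ xy. f (fst xy) \<partial>measure_pmf p) = (\<integral>\<^sup>+ x. ennreal (pmf (map_pmf fst p) x) * f x \<partial>count_space UNIV)"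
  unfolding nn_integral_map_pmf[where g=fst and f=f, symmetric] by (rule nn_integral_measure_pmf)

lemma pmf_fst_eq_nn_integral:
  fixes p :: "('a::countable \<times> 'b::countable) pmf"
  shows "ennreal (pmf (map_pmf fst p) x) = (\<integral>\<^sup>+ y. ennreal (pmf p (x, y)) \<partial>count_space UNIV)"
proof -
  have "ennreal (pmf (map_pmf fst p) x) = (\<integral>\<^sup>+ z. indicator (fst -` {x}) z \<partial>measure_pmf p)"
    by (simp add: pmf_map measure_pmf.emeasure_eq_measure)
  also have "\<dots> = (\<integral>\<^sup>+ x'. (\<integral>\<^sup>+ y. ennreal (pmf p (x', y)) \<partial>count_space UNIV) * indicator {x} x'
                     \<partial>count_space UNIV)"
    by (subst nn_integral_measure_pmf_prod) (simp add: indicator_def nn_integral_multc[symmetric])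
  finally show ?thesis by simp
qed

lemma pmf_snd_eq_nn_integral:
  fixes p :: "('a::countable \<times> 'b::countable) pmf"
  shows "ennreal (pmf (map_pmf snd p) y) = (\<integral>\<^sup>+ x. ennreal (pmf p (x, y)) \<partial>count_space UNIV)"
proof -
  have "ennreal (pmf (map_pmf snd p) y) = (\<integral>\<^sup>+ z. indicator (snd -` {y}) z \<partial>measure_pmf p)"
    by (simp add: pmf_map measure_pmf.emeasure_eq_measure)
  also have "\<dots> = (\<integral>\<^sup>+ x. \<integral>\<^sup>+ y'. ennreal (pmf p (x, y')) * indicator {y} y' \<partial>count_space UNIV \<partial>count_space UNIV)"
    by (subst nn_integral_measure_pmf_prod) (simp add: indicator_def)
  finally show ?thesis by simp
qed

lemma pmf_le_pmf_fst: "pmf p (x, y) \<le> pmf (map_pmf fst p) x"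
  by (simp add: pmf_map measure_pmf_single[symmetric] del: measure_pmf_single
      ; rule measure_pmf.finite_measure_mono; auto)

lemma pmf_le_pmf_snd: "pmf p (x, y) \<le> pmf (map_pmf snd p) y"
  by (simp add: pmf_map measure_pmf_single[symmetric] del: measure_pmf_single
      ; rule measure_pmf.finite_measure_mono; auto)

lemma nn_integral_count_space_subset_le:
  "A \<subseteq> B \<Longrightarrow> (\<integral>\<^sup>+ x. f x \<partial>count_space A) \<le> (\<integral>\<^sup>+ x. f x \<partial>count_space B)"
  by (subst (1 2) nn_integral_count_space_indicator[where 'a='a])
     (auto intro!: nn_integral_mono split: split_indicator simp: NO_MATCH_def)

lemma nn_integral_measure_pmf_swap:
  "(\<integral>\<^sup>+ a. \<integral>\<^sup>+ b. f a b \<partial>measure_pmf B \<partial>measure_pmf A) =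
   (\<integral>\<^sup>+ b. \<integral>\<^sup>+ a. f a b \<partial>measure_pmf A \<partial>measure_pmf B)"
proof -
  have "(\<integral>\<^sup>+ a. \<integral>\<^sup>+ b. f a b \<partial>measure_pmf B \<partial>measure_pmf A) =
        (\<integral>\<^sup>+ z. f (snd z) (fst z) \<partial>measure_pmf (pair_pmf B A))"
    by (subst pair_commute_pmf) (simp add: case_prod_unfold nn_integral_pair_pmf')
  also have "\<dots> = (\<integral>\<^sup>+ b. \<integral>\<^sup>+ a. f a b \<partial>measure_pmf A \<partial>measure_pmf B)"
    by (simp add: nn_integral_pair_pmf')
  finally show ?thesis .
qed

lemma card_lists_with_prefix:
  "card {w::bool list. length w = N \<and> prefix c w} = (if length c \<le> N then 2 ^ (N - length c) else 0)"
proof (cases "length c \<le> N")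
  case True
  have "{w::bool list. length w = N \<and> prefix c w} = (\<lambda>v. c @ v) ` {v. set v \<subseteq> UNIV \<and> length v = N - length c}"
    using True by (auto simp: prefix_def)
  moreover have "inj_on (\<lambda>v. c @ v) X" for X by (auto simp: inj_on_def)
  ultimately have "card {w::bool list. length w = N \<and> prefix c w} =
      card {v::bool list. set v \<subseteq> UNIV \<and> length v = N - length c}"
    by (simp add: card_image)
  also have "\<dots> = 2 ^ (N - length c)"
    by (subst card_lists_length_eq) auto
  finally show ?thesis using True by simp
next
  case False
  then have "{w::bool list. length w = N \<and> prefix c w} = {}"
    using prefix_length_le by fastforce
  with False show ?thesis by (simp only: card.empty) simp
qed

text \<open>Codewords of length at most \<open>N\<close> own disjoint sets of extensions to length \<open>N\<close>.\<close>

lemma kraft_inequality_finite: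
  assumes pf: "prefix_free C" and fin: "finite C" and len: "\<And>c. c \<in> C \<Longrightarrow> length c \<le> N"
  shows "(\<Sum>c\<in>C. (1/2::real) ^ length c) \<le> 1"
proof -
  define E where "E c = {w::bool list. length w = N \<and> prefix c w}" for c
  have fE: "finite (E c)" for c
    unfolding E_def by (rule finite_subset[of _ "{w. length w = N}"])
      (use finite_lists_length_eq[of "UNIV::bool set" N] in auto)
  have disj: "E c \<inter> E c' = {}" if "c \<in> C" "c' \<in> C" "c \<noteq> c'" for c c'
  proof (rule ccontr)
    assume "E c \<inter> E c' \<noteq> {}"
    then obtain w where "prefix c w" "prefix c' w" unfolding E_def by auto
    then have "prefix c c' \<or> prefix c' c" using prefix_same_cases by blast
    then show False using pf that unfolding prefix_free_def strict_prefix_def by blast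
  qed
  have "(\<Sum>c\<in>C. real (card (E c))) = real (card (\<Union>c\<in>C. E c))"
    using card_UN_disjoint[OF fin, of E] fE disj by (simp add: of_nat_sum)
  also have "\<dots> \<le> real (card {w::bool list. set w \<subseteq> UNIV \<and> length w = N})"
    by (intro of_nat_mono card_mono finite_lists_length_eq) (auto simp: E_def)
  also have "\<dots> = 2 ^ N" by (subst card_lists_length_eq) auto
  finally have s: "(\<Sum>c\<in>C. real (card (E c))) \<le> 2 ^ N" .
  have "(\<Sum>c\<in>C. (1/2::real) ^ length c) = (\<Sum>c\<in>C. real (card (E c))) / 2 ^ N"
    unfolding sum_divide_distrib
  proof (rule sum.cong)
    fix c assume "c \<in> C"
    then have l: "length c \<le> N" by (rule len)
    then have "real (card (E c)) = 2 ^ (N - length c)" by (simp add: E_def card_lists_with_prefix)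
    moreover have "(2::real) ^ N = 2 ^ (N - length c) * 2 ^ length c"
      using l by (simp add: power_add[symmetric])
    ultimately show "(1/2::real) ^ length c = real (card (E c)) / 2 ^ N"
      by (simp add: power_one_over)
  qed simp
  also have "\<dots> \<le> 1" using s by simp
  finally show ?thesis .
qed

lemma kraft_inequality:
  assumes pf: "prefix_free C"
  shows "(\<integral>\<^sup>+ c. ennreal ((1/2) ^ length c) \<partial>count_space C) \<le> 1"
proof -
  define C\<^sub>N where "C\<^sub>N N = {c \<in> C. length c \<le> N}" for N
  define f where "f N c = ennreal ((1/2) ^ length c) * indicator (C\<^sub>N N) c" for N c
  have inc: "incseq f" unfolding f_def incseq_def le_fun_def C\<^sub>N_def
    by (auto intro!: mult_left_mono split: split_indicator)
  have sup: "(SUP N. f N c) = ennreal ((1/2) ^ length c) * indicator C c" for c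
  proof (cases "c \<in> C")
    case True
    have "(SUP N. f N c) = f (length c) c"
    proof (rule antisym)
      show "(SUP N. f N c) \<le> f (length c) c"
        by (rule SUP_least) (auto simp: f_def C\<^sub>N_def split: split_indicator)
    qed (rule SUP_upper, simp)
    then show ?thesis using True by (simp add: f_def C\<^sub>N_def)
  qed (simp add: f_def C\<^sub>N_def)
  have fin: "finite (C\<^sub>N N)" for N
    by (rule finite_subset[of _ "{w::bool list. set w \<subseteq> UNIV \<and> length w \<le> N}"])
      (use finite_lists_length_le[of "UNIV::bool set" N] in \<open>auto simp: C\<^sub>N_def\<close>)
  have "integral\<^sup>N (count_space UNIV) (f N) \<le> 1" for N
  proof -
    have "integral\<^sup>N (count_space UNIV) (f N) = (\<integral>\<^sup>+ c. ennreal ((1/2) ^ length c) \<partial>count_space (C\<^sub>N N))"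
      unfolding f_def by (rule nn_integral_count_space_indicator[symmetric]) simp
    also have "\<dots> = ennreal (\<Sum>c\<in>C\<^sub>N N. (1/2) ^ length c)"
      by (simp add: nn_integral_count_space_finite[OF fin] sum_ennreal)
    also have "\<dots> \<le> 1"
    proof -
      have "prefix_free (C\<^sub>N N)" using pf unfolding prefix_free_def C\<^sub>N_def by blast
      moreover have "\<And>c. c \<in> C\<^sub>N N \<Longrightarrow> length c \<le> N" by (simp add: C\<^sub>N_def)
      ultimately show ?thesis
        by (subst ennreal_le_1) (rule kraft_inequality_finite[OF _ fin])
    qed
    finally show ?thesis .
  qed
  moreover have "(\<integral>\<^sup>+ c. ennreal ((1/2) ^ length c) \<partial>count_space C) = (SUP N. integral\<^sup>N (count_space UNIV) (f N))"
    by (simp add: sup[symmetric] nn_integral_count_space_indicator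
        nn_integral_monotone_convergence_SUP[OF inc])
  ultimately show ?thesis by (simp add: SUP_least)
qed

section \<open>Conditional distributions of a source\<close>

abbreviation pX where "pX P n \<equiv> map_pmf fst (P n)"
abbreviation pY where "pY P n \<equiv> map_pmf snd (P n)"

definition self_info :: "(nat \<Rightarrow> ('a list \<times> 'b list) pmf) \<Rightarrow> nat \<Rightarrow> 'a list \<Rightarrow> 'b list \<Rightarrow> real" where
  "self_info P n x y = log 2 (1 / condXY P n x y)"

lemma condXY_nonneg: "condXY P n x y \<ge> 0"
  by (simp add: condXY_def)

lemma condYX_nonneg: "condYX P n y x \<ge> 0"
  by (simp add: condYX_def)

lemma condXY_le_1: "condXY P n x y \<le> 1"
  unfolding condXY_def using pmf_le_pmf_snd[of "P n" x y]
  by (cases "pmf (pY P n) y = 0") (auto simp: divide_le_eq_1)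

lemma pmf_eq_pmf_fst_mult_condYX: "pmf (P n) (x, y) = pmf (pX P n) x * condYX P n y x"
  unfolding condYX_def using pmf_le_pmf_fst[of "P n" x y] pmf_nonneg[of "P n" "(x,y)"]
  by (cases "pmf (pX P n) x = 0") auto

lemma pmf_eq_pmf_snd_mult_condXY: "pmf (P n) (x, y) = pmf (pY P n) y * condXY P n x y"
  unfolding condXY_def using pmf_le_pmf_snd[of "P n" x y] pmf_nonneg[of "P n" "(x,y)"]
  by (cases "pmf (pY P n) y = 0") auto

lemma pmf_pos_if_condXY_pos: "condXY P n x y > 0 \<Longrightarrow> pmf (P n) (x, y) > 0"
  using pmf_nonneg[of "P n" "(x,y)"] unfolding condXY_def
  by (cases "pmf (P n) (x, y) = 0") auto

lemma self_info_nonneg: "self_info P n x y \<ge> 0"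
proof (cases "condXY P n x y = 0")
  case False
  then have "0 < condXY P n x y" using condXY_nonneg[of P n x y] by linarith
  then show ?thesis using condXY_le_1[of P n x y] by (simp add: self_info_def field_simps)
qed (simp add: self_info_def log_def)

lemma self_info_gt_iff:
  assumes "condXY P n x y > 0"
  shows "self_info P n x y > a \<longleftrightarrow> condXY P n x y < 2 powr (- a)"
proof -
  have "self_info P n x y = - log 2 (condXY P n x y)"
    using assms by (simp add: self_info_def log_divide)
  then have "self_info P n x y > a \<longleftrightarrow> log 2 (condXY P n x y) < - a" by linarith
  also have "\<dots> \<longleftrightarrow> condXY P n x y < 2 powr (- a)"
    using assms by (simp add: log_less_iff)
  finally show ?thesis .
qed

lemma mult_nn_integral_condYX:
  "ennreal (pmf (pX P n) x) * (\<integral>\<^sup>+ y. ennreal (condYX P n y x) * h y \<partial>count_space UNIV)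
     = (\<integral>\<^sup>+ y. ennreal (pmf (P n) (x, y)) * h y \<partial>count_space UNIV)"
  by (subst nn_integral_cmult[symmetric]) (simp_all add: pmf_eq_pmf_fst_mult_condYX[of P n x]
      ennreal_mult condYX_nonneg mult.assoc)

lemma mult_nn_integral_condXY:
  "ennreal (pmf (pY P n) y) * (\<integral>\<^sup>+ x. ennreal (condXY P n x y) * h x \<partial>count_space UNIV)
     = (\<integral>\<^sup>+ x. ennreal (pmf (P n) (x, y)) * h x \<partial>count_space UNIV)"
  by (subst nn_integral_cmult[symmetric]) (simp_all add: pmf_eq_pmf_snd_mult_condXY[of P n _ y]
      ennreal_mult condXY_nonneg mult.assoc)

lemma nn_integral_source_condYX:
  fixes P :: "nat \<Rightarrow> ('a::countable list \<times> 'b::countable list) pmf"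
  shows "(\<integral>\<^sup>+ z. g z \<partial>measure_pmf (P n)) =
    (\<integral>\<^sup>+ x. ennreal (pmf (pX P n) x) * (\<integral>\<^sup>+ y. ennreal (condYX P n y x) * g (x, y) \<partial>count_space UNIV)
       \<partial>count_space UNIV)"
  unfolding nn_integral_measure_pmf_prod
  by (intro nn_integral_cong) (rule mult_nn_integral_condYX[symmetric])

lemma nn_integral_source_condXY:
  fixes P :: "nat \<Rightarrow> ('a::countable list \<times> 'b::countable list) pmf"
  shows "(\<integral>\<^sup>+ z. g z \<partial>measure_pmf (P n)) =
    (\<integral>\<^sup>+ y. ennreal (pmf (pY P n) y) * (\<integral>\<^sup>+ x. ennreal (condXY P n x y) * g (x, y) \<partial>count_space UNIV)
       \<partial>count_space UNIV)"
  unfolding nn_integral_measure_pmf_prod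
  by (subst nn_integral_count_space_nn_integral, simp, simp)
     (intro nn_integral_cong, rule mult_nn_integral_condXY[symmetric])

lemma nn_integral_condXY_le_1:
  fixes P :: "nat \<Rightarrow> ('a::countable list \<times> 'b::countable list) pmf"
  shows "(\<integral>\<^sup>+ x. ennreal (condXY P n x y) \<partial>count_space UNIV) \<le> 1"
proof (cases "pmf (pY P n) y = 0")
  case False
  then have "ennreal (pmf (pY P n) y) * (\<integral>\<^sup>+ x. ennreal (condXY P n x y) \<partial>count_space UNIV) =
      ennreal (pmf (pY P n) y) * 1"
    using mult_nn_integral_condXY[of P n y "\<lambda>_. 1"] pmf_snd_eq_nn_integral[of "P n" y] by simp
  with False show ?thesis by (subst (asm) ennreal_mult_cancel_left) auto
qed (simp add: condXY_def)

lemma nn_integral_condYX_eq_1: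
  fixes P :: "nat \<Rightarrow> ('a::countable list \<times> 'b::countable list) pmf"
  assumes "pmf (pX P n) x > 0"
  shows "(\<integral>\<^sup>+ y. ennreal (condYX P n y x) \<partial>count_space UNIV) = 1"
proof -
  have "ennreal (pmf (pX P n) x) * (\<integral>\<^sup>+ y. ennreal (condYX P n y x) \<partial>count_space UNIV) =
      ennreal (pmf (pX P n) x) * 1"
    using mult_nn_integral_condYX[of P n x "\<lambda>_. 1"] pmf_fst_eq_nn_integral[of "P n" x] by simp
  with assms show ?thesis by (subst (asm) ennreal_mult_cancel_left) auto
qed

section \<open>The conditional tail and \<open>hbar\<close>\<close>

definition cond_tail :: "(nat \<Rightarrow> ('a list \<times> 'b list) pmf) \<Rightarrow> nat \<Rightarrow> 'a list \<Rightarrow> real \<Rightarrow> ennreal" where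
  "cond_tail P n x a = (\<integral>\<^sup>+ y. ennreal (condYX P n y x) \<partial>count_space {y. log 2 (1 / condXY P n x y) > a})"

definition cond_self_info :: "(nat \<Rightarrow> ('a list \<times> 'b list) pmf) \<Rightarrow> nat \<Rightarrow> 'a list \<Rightarrow> ennreal" where
  "cond_self_info P n x = (\<integral>\<^sup>+ y. ennreal (condYX P n y x) * ennreal (self_info P n x y) \<partial>count_space UNIV)"

lemma hbar_eq_Inf_cond_tail: "hbar P n \<epsilon> x = Inf {a. cond_tail P n x a \<le> ennreal \<epsilon>}"
  unfolding hbar_def cond_tail_def ..

lemma cond_tail_eq_indicator:
  "cond_tail P n x a =
     (\<integral>\<^sup>+ y. ennreal (condYX P n y x) * indicator {y. self_info P n x y > a} y \<partial>count_space UNIV)"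
  unfolding cond_tail_def self_info_def by (rule nn_integral_count_space_indicator) simp

lemma cond_tail_antimono: "a \<le> b \<Longrightarrow> cond_tail P n x b \<le> cond_tail P n x a"
  unfolding cond_tail_eq_indicator
  by (intro nn_integral_mono mult_left_mono) (auto split: split_indicator)

lemma cond_tail_markov:
  assumes "0 < a"
  shows "cond_tail P n x a * ennreal a \<le> cond_self_info P n x"
  unfolding cond_tail_eq_indicator cond_self_info_def
  by (subst nn_integral_multc[symmetric], simp, intro nn_integral_mono)
     (auto intro!: mult_left_mono ennreal_leI split: split_indicator)

context
  fixes P :: "nat \<Rightarrow> ('a::countable list \<times> 'b::countable list) pmf" and n x
  assumes px: "pmf (pX P n) x > 0"
begin

lemma cond_tail_le_1: "cond_tail P n x a \<le> 1"
proof -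
  have "cond_tail P n x a \<le> (\<integral>\<^sup>+ y. ennreal (condYX P n y x) \<partial>count_space UNIV)"
    unfolding cond_tail_eq_indicator
    by (intro nn_integral_mono) (simp add: mult_left_le split: split_indicator)
  then show ?thesis by (simp add: nn_integral_condYX_eq_1[of P n x, OF px])
qed

lemma cond_tail_negative:
  assumes "a < 0"
  shows "cond_tail P n x a = 1"
proof -
  have "indicator {y. self_info P n x y > a} y = (1::ennreal)" for y
    using assms self_info_nonneg[of P n x y] by simp
  then show ?thesis
    unfolding cond_tail_eq_indicator using nn_integral_condYX_eq_1[of P n x, OF px] by simp
qed

text \<open>A finite conditional mean makes the set defining \<open>hbar\<close> nonempty (by Markov's inequality)
  and \<open>\<epsilon> < 1\<close> bounds it below; otherwise \<open>hbar\<close> would be a junk value of \<open>Inf\<close>.\<close>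

context
  fixes \<epsilon> :: real
  assumes eps: "0 < \<epsilon>" "\<epsilon> < 1" and finite_info: "cond_self_info P n x < \<infinity>"
begin

lemma cond_tail_le_imp_nonneg: "cond_tail P n x a \<le> ennreal \<epsilon> \<Longrightarrow> 0 \<le> a"
  using cond_tail_negative[of a] eps by (cases "a < 0") auto

lemma bdd_below_cond_tail_le: "bdd_below {a. cond_tail P n x a \<le> ennreal \<epsilon>}"
  using cond_tail_le_imp_nonneg by (intro bdd_belowI) auto

lemma cond_tail_le_above_markov_bound:
  assumes b: "enn2real (cond_self_info P n x) / \<epsilon> < b"
  shows "cond_tail P n x b \<le> ennreal \<epsilon>"
proof -
  define e where "e = enn2real (cond_self_info P n x)"
  define t where "t = enn2real (cond_tail P n x b)"
  have e: "cond_self_info P n x = ennreal e" "0 \<le> e"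
    using finite_info by (simp_all add: e_def less_top ennreal_enn2real_if)
  have "cond_tail P n x b < \<top>"
    using cond_tail_le_1[of b] ennreal_one_less_top by (rule le_less_trans)
  then have t: "cond_tail P n x b = ennreal t" "0 \<le> t"
    by (simp_all add: t_def ennreal_enn2real_if)
  have b0: "0 < b" using b e eps unfolding e_def[symmetric] by (meson divide_nonneg_pos le_less_trans)
  have "t * b \<le> e"
    using cond_tail_markov[OF b0, of P n x] b0 e t by (simp add: ennreal_mult[symmetric])
  also have "e < \<epsilon> * b" using b eps unfolding e_def[symmetric] by (simp add: field_simps)
  finally have "t \<le> \<epsilon>" using b0 by (simp add: mult.commute)
  then show ?thesis using t by (simp add: ennreal_leI)
qed

lemma cond_tail_le_nonempty: "{a. cond_tail P n x a \<le> ennreal \<epsilon>} \<noteq> {}"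
  using cond_tail_le_above_markov_bound[of "enn2real (cond_self_info P n x) / \<epsilon> + 1"] by auto

lemma hbar_le: "cond_tail P n x b \<le> ennreal \<epsilon> \<Longrightarrow> hbar P n \<epsilon> x \<le> b"
  unfolding hbar_eq_Inf_cond_tail by (rule cInf_lower[OF _ bdd_below_cond_tail_le]) simp

lemma hbar_nonneg: "0 \<le> hbar P n \<epsilon> x"
  unfolding hbar_eq_Inf_cond_tail
  by (rule cInf_greatest[OF cond_tail_le_nonempty]) (auto intro: cond_tail_le_imp_nonneg)

lemma cond_tail_le_above_hbar:
  assumes "hbar P n \<epsilon> x < b"
  shows "cond_tail P n x b \<le> ennreal \<epsilon>"
proof -
  obtain a where "cond_tail P n x a \<le> ennreal \<epsilon>" "a < b"
    using assms unfolding hbar_eq_Inf_cond_tail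
      cInf_less_iff[OF cond_tail_le_nonempty bdd_below_cond_tail_le] by auto
  then show ?thesis using cond_tail_antimono[of a b P n x] by simp
qed

lemma hbar_le_markov_bound: "hbar P n \<epsilon> x \<le> enn2real (cond_self_info P n x) / \<epsilon>"
  by (rule dense_ge) (rule hbar_le, erule cond_tail_le_above_markov_bound)

end

lemma hbar_antimono:
  assumes "0 < \<epsilon>\<^sub>1" "\<epsilon>\<^sub>1 \<le> \<epsilon>\<^sub>2" "\<epsilon>\<^sub>2 < 1" and finite_info: "cond_self_info P n x < \<infinity>"
  shows "hbar P n \<epsilon>\<^sub>2 x \<le> hbar P n \<epsilon>\<^sub>1 x"
  unfolding hbar_eq_Inf_cond_tail[of P n \<epsilon>\<^sub>1]
proof (rule cInf_greatest)
  show "{a. cond_tail P n x a \<le> ennreal \<epsilon>\<^sub>1} \<noteq> {}"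
    using assms by (intro cond_tail_le_nonempty) auto
  fix a assume "a \<in> {a. cond_tail P n x a \<le> ennreal \<epsilon>\<^sub>1}"
  then have "cond_tail P n x a \<le> ennreal \<epsilon>\<^sub>2" using assms(2) by (auto intro: order_trans ennreal_leI)
  then show "hbar P n \<epsilon>\<^sub>2 x \<le> a" using assms by (intro hbar_le) auto
qed

end

section \<open>Uniformly integrable general sources\<close>

definition info_tail :: "(nat \<Rightarrow> ('a list \<times> 'b list) pmf) \<Rightarrow> real \<Rightarrow> ennreal" where
  "info_tail P u = (SUP n\<in>{1..}. \<integral>\<^sup>+ z. ennreal (pmf (map_pmf (info_density P n) (P n)) z * \<bar>z\<bar>)
                      \<partial>count_space {z. \<bar>z\<bar> \<ge> u})"

lemma info_density_eq: "info_density P n (x, y) = self_info P n x y / real n"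
  by (simp add: info_density_def self_info_def)

lemma info_density_nonneg: "info_density P n z \<ge> 0"
  by (cases z) (simp add: info_density_eq self_info_nonneg)

lemma nn_integral_info_density_tail:
  "(\<integral>\<^sup>+ z. ennreal (pmf (map_pmf (info_density P n) (P n)) z * \<bar>z\<bar>) \<partial>count_space {z. \<bar>z\<bar> \<ge> u})
   = (\<integral>\<^sup>+ xy. ennreal (info_density P n xy) * indicator {xy. info_density P n xy \<ge> u} xy \<partial>measure_pmf (P n))"
proof -
  have "(\<integral>\<^sup>+ z. ennreal (pmf (map_pmf (info_density P n) (P n)) z * \<bar>z\<bar>) \<partial>count_space {z. \<bar>z\<bar> \<ge> u})
     = (\<integral>\<^sup>+ z. ennreal \<bar>z\<bar> * indicator {z. \<bar>z\<bar> \<ge> u} z \<partial>measure_pmf (map_pmf (info_density P n) (P n)))"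
    by (subst nn_integral_count_space_indicator)
       (simp_all add: nn_integral_measure_pmf ennreal_mult mult.assoc)
  also have "\<dots> = (\<integral>\<^sup>+ xy. ennreal (info_density P n xy) * indicator {xy. info_density P n xy \<ge> u} xy
                    \<partial>measure_pmf (P n))"
    by (auto intro!: nn_integral_cong simp: info_density_nonneg indicator_def)
  finally show ?thesis .
qed

text \<open>Splitting at the level \<open>u\<close>: below it the density is at most \<open>u\<close>, above it the
  integrand is one of the tails controlled by uniform integrability.\<close>

lemma nn_integral_info_density_le_info_tail:
  assumes "1 \<le> n"
  shows "(\<integral>\<^sup>+ xy. ennreal (info_density P n xy) * indicator A xy \<partial>measure_pmf (P n))
        \<le> ennreal u * emeasure (measure_pmf (P n)) A + info_tail P u"
proof -
  have "(\<integral>\<^sup>+ xy. ennreal (info_density P n xy) * indicator A xy \<partial>measure_pmf (P n))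
     \<le> (\<integral>\<^sup>+ xy. ennreal u * indicator A xy +
           ennreal (info_density P n xy) * indicator {xy. info_density P n xy \<ge> u} xy \<partial>measure_pmf (P n))"
    by (intro nn_integral_mono, simp split: split_indicator)
       (auto intro: ennreal_leI add_increasing)
  also have "\<dots> = ennreal u * emeasure (measure_pmf (P n)) A +
       (\<integral>\<^sup>+ xy. ennreal (info_density P n xy) * indicator {xy. info_density P n xy \<ge> u} xy \<partial>measure_pmf (P n))"
    by (subst nn_integral_add) (simp_all add: nn_integral_cmult)
  also have "(\<integral>\<^sup>+ xy. ennreal (info_density P n xy) * indicator {xy. info_density P n xy \<ge> u} xy
                \<partial>measure_pmf (P n)) \<le> info_tail P u"
    unfolding info_tail_def nn_integral_info_density_tail[symmetric] using assms by (intro SUP_upper) simp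
  finally show ?thesis by (simp add: add_left_mono)
qed

lemma nn_integral_self_info_eq:
  assumes "1 \<le> n"
  shows "(\<integral>\<^sup>+ xy. ennreal (self_info P n (fst xy) (snd xy)) * indicator A xy \<partial>measure_pmf (P n))
     = ennreal (real n) * (\<integral>\<^sup>+ xy. ennreal (info_density P n xy) * indicator A xy \<partial>measure_pmf (P n))"
proof -
  have "self_info P n x y = real n * info_density P n (x, y)" for x y
    using assms by (simp add: info_density_eq)
  then show ?thesis
    by (subst nn_integral_cmult[symmetric])
       (auto intro!: nn_integral_cong simp: ennreal_mult info_density_nonneg mult.assoc)
qed

locale correlated_source =
  fixes P :: "nat \<Rightarrow> ('a::countable list \<times> 'b::countable list) pmf"
  assumes general_source: "general_source P"
begin

lemma pmf_fst_pos: "length x = n \<Longrightarrow> pmf (pX P n) x > 0"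
  using general_source unfolding general_source_def by blast

lemma length_if_pmf_pos:
  assumes "pmf (P n) (x, y) > 0"
  shows "length x = n" "length y = n"
  using assms general_source unfolding general_source_def by (auto simp: set_pmf_eq')

lemma length_if_pmf_fst_pos:
  assumes "pmf (pX P n) x > 0"
  shows "length x = n"
proof -
  have "x \<in> set_pmf (pX P n)" using assms by (simp add: set_pmf_eq')
  then obtain y where "(x, y) \<in> set_pmf (P n)" by auto
  then show ?thesis using general_source unfolding general_source_def by auto
qed

end

locale ui_correlated_source = correlated_source +
  assumes uniformly_integrable: "uniformly_integrable_source P"
begin

lemma info_tail_tendsto_0: "(info_tail P \<longlongrightarrow> 0) at_top"
  using uniformly_integrable
  unfolding uniformly_integrable_source_def uniformly_integrable_seq_def info_tail_def .

lemma ex_info_tail_less: "0 < d \<Longrightarrow> \<exists>U. \<forall>u\<ge>U. info_tail P u < d"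
  using order_tendstoD(2)[OF info_tail_tendsto_0] by (simp add: eventually_at_top_linorder)

lemma nn_integral_self_info_finite:
  assumes "1 \<le> n"
  shows "(\<integral>\<^sup>+ xy. ennreal (self_info P n (fst xy) (snd xy)) \<partial>measure_pmf (P n)) < \<infinity>"
proof -
  obtain U where "info_tail P U < 1" using ex_info_tail_less[of 1] by auto
  then have "info_tail P U < \<infinity>" using ennreal_one_less_top by (metis infinity_ennreal_def order.strict_trans)
  have "(\<integral>\<^sup>+ xy. ennreal (self_info P n (fst xy) (snd xy)) \<partial>measure_pmf (P n))
     = ennreal (real n) * (\<integral>\<^sup>+ xy. ennreal (info_density P n xy) * indicator UNIV xy \<partial>measure_pmf (P n))"
    using nn_integral_self_info_eq[OF assms, of P UNIV] by simp
  also have "\<dots> \<le> ennreal (real n) * (ennreal U * 1 + info_tail P U)"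
    using nn_integral_info_density_le_info_tail[OF assms, of P UNIV U] by (intro mult_left_mono) simp_all
  also have "\<dots> < \<infinity>"
    using \<open>info_tail P U < \<infinity>\<close> by (simp add: ennreal_mult_less_top less_top)
  finally show ?thesis .
qed

lemma cond_self_info_finite:
  assumes "1 \<le> n" "length x = n"
  shows "cond_self_info P n x < \<infinity>"
proof -
  have "ennreal (pmf (pX P n) x) * cond_self_info P n x \<le>
    (\<integral>\<^sup>+ x. ennreal (pmf (pX P n) x) * cond_self_info P n x \<partial>count_space UNIV)"
    by (rule nn_integral_ge_point) simp
  also have "\<dots> = (\<integral>\<^sup>+ xy. ennreal (self_info P n (fst xy) (snd xy)) \<partial>measure_pmf (P n))"
    unfolding cond_self_info_def by (subst nn_integral_source_condYX) simp
  also have "\<dots> < \<infinity>" by (rule nn_integral_self_info_finite[OF assms(1)])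
  finally show ?thesis
    using pmf_fst_pos[OF assms(2)] by (auto simp: ennreal_mult_less_top top.not_eq_extremum)
qed

end

section \<open>The converse: achievable rates dominate \<open>Hs_bar\<close>\<close>

lemma kraft_correctly_decoded:
  assumes "SW_code n \<phi>"
  shows "(\<integral>\<^sup>+ x. ennreal ((1/2) ^ length (\<phi> x)) \<partial>count_space {x. length x = n \<and> \<psi> (\<phi> x) y = x}) \<le> 1"
proof -
  let ?C = "{x. length x = n \<and> \<psi> (\<phi> x) y = x}"
  have inj: "inj_on \<phi> ?C" by (rule inj_onI) (metis (mono_tags, lifting) mem_Collect_eq)
  have "(\<integral>\<^sup>+ x. ennreal ((1/2) ^ length (\<phi> x)) \<partial>count_space ?C) =
      (\<integral>\<^sup>+ c. ennreal ((1/2) ^ length c) \<partial>count_space (\<phi> ` ?C))"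
    by (rule nn_integral_bij_count_space[OF inj_on_imp_bij_betw[OF inj],
          where f="\<lambda>c. ennreal ((1/2) ^ length c)"])
  also have "\<dots> \<le> (\<integral>\<^sup>+ c. ennreal ((1/2) ^ length c) \<partial>count_space (\<phi> ` {x. length x = n}))"
    by (rule nn_integral_count_space_subset_le) auto
  also have "\<dots> \<le> 1"
    using assms by (intro kraft_inequality) (simp add: SW_code_def)
  finally show ?thesis .
qed

lemma condXY_less_if_self_info_greater:
  assumes "condXY P n x y > 0" "self_info P n x y > real l + c"
  shows "condXY P n x y < 2 powr (- c) * (1/2) ^ l"
proof -
  have "(2::real) powr (- (real l + c)) = 2 powr (- c) * 2 powr (- real l)"
    by (subst powr_add[symmetric]) (simp add: algebra_simps)
  also have "(2::real) powr (- real l) = (1/2) ^ l"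
    by (simp add: powr_minus powr_realpow power_one_over inverse_eq_divide)
  finally have "(2::real) powr (- (real l + c)) = 2 powr (- c) * (1/2) ^ l" .
  with assms self_info_gt_iff[OF assms(1)] show ?thesis by simp
qed

context correlated_source
begin

text \<open>Among the \<open>x\<close> decoded correctly from a given \<open>y\<close>, those whose self-information exceeds
  the codeword length by \<open>c\<close> carry conditional mass \<open>\<le> 2\<^sup>-\<^sup>c\<close>: this is where Kraft enters.\<close>

lemma nn_integral_condXY_correct_exceeding:
  assumes "SW_code n \<phi>"
  shows "(\<integral>\<^sup>+ x. ennreal (condXY P n x y) *
            indicator {x. self_info P n x y > real (length (\<phi> x)) + c \<and> \<psi> (\<phi> x) y = x} x
          \<partial>count_space UNIV) \<le> ennreal (2 powr (- c))"
proof -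
  let ?D = "{x. length x = n \<and> \<psi> (\<phi> x) y = x}"
  have "(\<integral>\<^sup>+ x. ennreal (condXY P n x y) *
            indicator {x. self_info P n x y > real (length (\<phi> x)) + c \<and> \<psi> (\<phi> x) y = x} x
          \<partial>count_space UNIV)
      \<le> (\<integral>\<^sup>+ x. ennreal (2 powr (- c)) * (ennreal ((1/2) ^ length (\<phi> x)) * indicator ?D x)
           \<partial>count_space UNIV)"
  proof (intro nn_integral_mono)
    fix x
    show "ennreal (condXY P n x y) *
            indicator {x. self_info P n x y > real (length (\<phi> x)) + c \<and> \<psi> (\<phi> x) y = x} x
          \<le> ennreal (2 powr (- c)) * (ennreal ((1/2) ^ length (\<phi> x)) * indicator ?D x)"
    proof (cases "condXY P n x y > 0 \<and> self_info P n x y > real (length (\<phi> x)) + c \<and> \<psi> (\<phi> x) y = x")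
      case True
      then have "pmf (P n) (x, y) > 0" by (intro pmf_pos_if_condXY_pos) simp
      then have "length x = n" by (rule length_if_pmf_pos(1))
      with True condXY_less_if_self_info_greater[of P n x y "length (\<phi> x)" c] show ?thesis
        by (simp add: ennreal_mult[symmetric] ennreal_leI)
    next
      case False
      then show ?thesis using condXY_nonneg[of P n x y]
        by (cases "condXY P n x y = 0") (auto split: split_indicator)
    qed
  qed
  also have "\<dots> = ennreal (2 powr (- c)) *
      (\<integral>\<^sup>+ x. ennreal ((1/2) ^ length (\<phi> x)) \<partial>count_space ?D)"
    by (simp add: nn_integral_cmult nn_integral_count_space_indicator)
  also have "\<dots> \<le> ennreal (2 powr (- c))"
    using mult_left_mono[OF kraft_correctly_decoded[OF assms, of \<psi> y], of "ennreal (2 powr (- c))"]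
    by simp
  finally show ?thesis .
qed

lemma prob_self_info_exceeds_code_length:
  assumes "SW_code n \<phi>"
  shows "emeasure (measure_pmf (P n)) {(x, y). self_info P n x y > real (length (\<phi> x)) + c}
     \<le> ennreal (SW_error P n \<phi> \<psi>) + ennreal (2 powr (- c))"
proof -
  let ?M = "measure_pmf (P n)"
  define B where "B = {(x, y). self_info P n x y > real (length (\<phi> x)) + c \<and> \<psi> (\<phi> x) y = x}"
  have "emeasure ?M {(x, y). self_info P n x y > real (length (\<phi> x)) + c}
      \<le> emeasure ?M (B \<union> {(x, y). \<psi> (\<phi> x) y \<noteq> x})"
    by (rule emeasure_mono) (auto simp: B_def)
  also have "\<dots> \<le> emeasure ?M B + ennreal (SW_error P n \<phi> \<psi>)"
    using emeasure_subadditive[of B ?M "{(x, y). \<psi> (\<phi> x) y \<noteq> x}"]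
    by (simp add: SW_error_def measure_pmf.emeasure_eq_measure)
  also have "emeasure ?M B = (\<integral>\<^sup>+ z. indicator B z \<partial>?M)" by simp
  also have "\<dots> \<le> (\<integral>\<^sup>+ y. ennreal (pmf (pY P n) y) * ennreal (2 powr (- c)) \<partial>count_space UNIV)"
  proof (subst nn_integral_source_condXY, intro nn_integral_mono mult_left_mono)
    fix y
    have eq: "indicator B (x, y) =
        indicator {x. self_info P n x y > real (length (\<phi> x)) + c \<and> \<psi> (\<phi> x) y = x} x" for x
      by (simp add: B_def indicator_def)
    show "(\<integral>\<^sup>+ x. ennreal (condXY P n x y) * indicator B (x, y) \<partial>count_space UNIV)
        \<le> ennreal (2 powr (- c))"
      unfolding eq by (rule nn_integral_condXY_correct_exceeding[OF assms])
  qed simp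
  also have "\<dots> = ennreal (2 powr (- c))"
    by (simp add: nn_integral_multc nn_integral_pmf)
  finally show ?thesis by (simp add: add.commute)
qed

end

lemma nn_integral_pmf_fst_cond_tail:
  fixes P :: "nat \<Rightarrow> ('a::countable list \<times> 'b::countable list) pmf"
  shows "(\<integral>\<^sup>+ x. ennreal (pmf (pX P n) x) * cond_tail P n x (g x) \<partial>count_space UNIV) =
    emeasure (measure_pmf (P n)) {(x, y). self_info P n x y > g x}"
  unfolding cond_tail_eq_indicator
  by (subst nn_integral_indicator[symmetric], simp, subst nn_integral_source_condYX)
     (auto intro!: nn_integral_cong simp: indicator_def)

lemma nn_integral_pmf_fst_cond_self_info:
  fixes P :: "nat \<Rightarrow> ('a::countable list \<times> 'b::countable list) pmf"
  shows "(\<integral>\<^sup>+ x. ennreal (pmf (pX P n) x) * (cond_self_info P n x * indicator A x) \<partial>count_space UNIV) =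
    (\<integral>\<^sup>+ xy. ennreal (self_info P n (fst xy) (snd xy)) * indicator (fst -` A) xy \<partial>measure_pmf (P n))"
  unfolding nn_integral_source_condYX[where P=P] cond_self_info_def
  by (auto intro!: nn_integral_cong simp: nn_integral_multc[symmetric] indicator_def mult.assoc)

context correlated_source
begin

lemma prob_cond_tail_exceeds_code_length:
  assumes "SW_code n \<phi>" and "0 < \<epsilon>"
  shows "emeasure (measure_pmf (pX P n)) {x. cond_tail P n x (real (length (\<phi> x)) + c) > ennreal \<epsilon>}
     \<le> ennreal ((SW_error P n \<phi> \<psi> + 2 powr (- c)) / \<epsilon>)"
proof -
  define bad where "bad = {x. cond_tail P n x (real (length (\<phi> x)) + c) > ennreal \<epsilon>}"
  define m where "m = measure (measure_pmf (pX P n)) bad"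
  have "emeasure (measure_pmf (pX P n)) bad = (\<integral>\<^sup>+ x. indicator bad x \<partial>measure_pmf (pX P n))"
    by (rule nn_integral_indicator[symmetric]) simp
  also have "\<dots> = (\<integral>\<^sup>+ x. ennreal (pmf (pX P n) x) * indicator bad x \<partial>count_space UNIV)"
    by (rule nn_integral_measure_pmf)
  finally have "ennreal (\<epsilon> * m) =
      (\<integral>\<^sup>+ x. ennreal \<epsilon> * (ennreal (pmf (pX P n) x) * indicator bad x) \<partial>count_space UNIV)"
    using assms(2) by (simp add: m_def measure_pmf.emeasure_eq_measure ennreal_mult nn_integral_cmult)
  also have "\<dots> \<le> (\<integral>\<^sup>+ x. ennreal (pmf (pX P n) x) * cond_tail P n x (real (length (\<phi> x)) + c)
                    \<partial>count_space UNIV)"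
    by (intro nn_integral_mono)
       (auto simp: bad_def mult.commute[of "ennreal \<epsilon>"] intro!: mult_left_mono split: split_indicator)
  also have "\<dots> \<le> ennreal (SW_error P n \<phi> \<psi>) + ennreal (2 powr (- c))"
    unfolding nn_integral_pmf_fst_cond_tail[where g="\<lambda>x. real (length (\<phi> x)) + c"]
    by (rule prob_self_info_exceeds_code_length[OF assms(1)])
  also have "\<dots> = ennreal (SW_error P n \<phi> \<psi> + 2 powr (- c))"
    by (simp add: SW_error_def ennreal_plus)
  finally have "\<epsilon> * m \<le> SW_error P n \<phi> \<psi> + 2 powr (- c)"
    by (subst (asm) ennreal_le_iff) (simp_all add: SW_error_def)
  then have "m \<le> (SW_error P n \<phi> \<psi> + 2 powr (- c)) / \<epsilon>"
    using assms(2) by (simp add: field_simps mult.commute)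
  then show ?thesis
    unfolding bad_def[symmetric] measure_pmf.emeasure_eq_measure m_def[symmetric] by (rule ennreal_leI)
qed

end

context ui_correlated_source
begin

lemma hbar_le_level_or_markov:
  assumes "1 \<le> n" "length x = n" "0 < \<epsilon>" "\<epsilon> < 1" "0 \<le> b"
  shows "ennreal (hbar P n \<epsilon> x) \<le>
    ennreal b + ennreal (1/\<epsilon>) * (cond_self_info P n x * indicator {x. cond_tail P n x b > ennreal \<epsilon>} x)"
proof -
  have px: "pmf (pX P n) x > 0" by (rule pmf_fst_pos[OF assms(2)])
  have fin: "cond_self_info P n x < \<infinity>" by (rule cond_self_info_finite[OF assms(1,2)])
  show ?thesis
  proof (cases "cond_tail P n x b > ennreal \<epsilon>")
    case False
    then have "hbar P n \<epsilon> x \<le> b" using assms px fin by (intro hbar_le) simp_all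
    then show ?thesis by (intro add_increasing2[OF zero_le] ennreal_leI)
  next
    case True
    have "ennreal (hbar P n \<epsilon> x) \<le> ennreal (enn2real (cond_self_info P n x) / \<epsilon>)"
      using assms px fin by (intro ennreal_leI hbar_le_markov_bound)
    also have "\<dots> = ennreal (1/\<epsilon>) * cond_self_info P n x"
      using fin assms(3) by (simp add: divide_ennreal[symmetric] ennreal_enn2real_if
          ennreal_divide_times less_top)
    also have "\<dots> = ennreal (1/\<epsilon>) *
        (cond_self_info P n x * indicator {x. cond_tail P n x b > ennreal \<epsilon>} x)"
      using True by simp
    finally show ?thesis by (rule add_increasing[OF zero_le])
  qed
qed

lemma nn_integral_hbar_le_code_length:
  fixes \<phi> :: "'a list \<Rightarrow> bool list"
  assumes n: "1 \<le> n" and eps: "0 < \<epsilon>" "\<epsilon> < 1" and c: "0 \<le> c"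
  defines "bad \<equiv> {x. cond_tail P n x (real (length (\<phi> x)) + c) > ennreal \<epsilon>}"
  shows "(\<integral>\<^sup>+ x. ennreal (pmf (pX P n) x * hbar P n \<epsilon> x) \<partial>count_space {x. length x = n})
    \<le> (\<integral>\<^sup>+ xy. ennreal (real (length (\<phi> (fst xy)))) \<partial>measure_pmf (P n)) + ennreal c + ennreal (1/\<epsilon>) *
      (\<integral>\<^sup>+ x. ennreal (pmf (pX P n) x) * (cond_self_info P n x * indicator bad x) \<partial>count_space UNIV)"
proof -
  define E where "E x = ennreal (pmf (pX P n) x) * (cond_self_info P n x * indicator bad x)" for x
  have "(\<integral>\<^sup>+ x. ennreal (pmf (pX P n) x * hbar P n \<epsilon> x) \<partial>count_space {x. length x = n})
      \<le> (\<integral>\<^sup>+ x. ennreal (pmf (pX P n) x) * ennreal (real (length (\<phi> x))) + ennreal (pmf (pX P n) x) * ennreal c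
            + ennreal (1/\<epsilon>) * E x \<partial>count_space {x. length x = n})"
  proof (intro nn_integral_mono)
    fix x assume "x \<in> space (count_space {x::'a list. length x = n})"
    then have "ennreal (hbar P n \<epsilon> x) \<le> ennreal (real (length (\<phi> x)) + c) +
        ennreal (1/\<epsilon>) * (cond_self_info P n x * indicator bad x)"
      using hbar_le_level_or_markov[OF n _ eps, of x "real (length (\<phi> x)) + c"] c
      by (simp add: bad_def indicator_def)
    then have "ennreal (pmf (pX P n) x) * ennreal (hbar P n \<epsilon> x) \<le> ennreal (pmf (pX P n) x) *
        (ennreal (real (length (\<phi> x)) + c) + ennreal (1/\<epsilon>) * (cond_self_info P n x * indicator bad x))"
      by (rule mult_left_mono) simp
    also have "\<dots> = ennreal (pmf (pX P n) x) * ennreal (real (length (\<phi> x))) +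
        ennreal (pmf (pX P n) x) * ennreal c + ennreal (1/\<epsilon>) * E x"
      using c by (simp add: E_def ennreal_plus distrib_left mult.left_commute)
    finally show "ennreal (pmf (pX P n) x * hbar P n \<epsilon> x) \<le> \<dots>"
      by (simp add: ennreal_mult')
  qed
  also have "\<dots> \<le> (\<integral>\<^sup>+ x. ennreal (pmf (pX P n) x) * ennreal (real (length (\<phi> x))) + ennreal (pmf (pX P n) x) * ennreal c
            + ennreal (1/\<epsilon>) * E x \<partial>count_space UNIV)"
    by (rule nn_integral_count_space_subset_le) simp
  also have "\<dots> = (\<integral>\<^sup>+ xy. ennreal (real (length (\<phi> (fst xy)))) \<partial>measure_pmf (P n)) + ennreal c
      + ennreal (1/\<epsilon>) * (\<integral>\<^sup>+ x. E x \<partial>count_space UNIV)"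
    by (simp add: nn_integral_measure_pmf_fst[where f="\<lambda>x. ennreal (real (length (\<phi> x)))"]
        nn_integral_add nn_integral_cmult nn_integral_multc nn_integral_pmf)
  finally show ?thesis unfolding E_def .
qed

lemma Hs_eps_le_exp_length:
  assumes n: "1 \<le> n" and code: "SW_code n \<phi>" and eps: "0 < \<epsilon>" "\<epsilon> < 1"
    and c: "0 \<le> c" and u: "0 \<le> u" "info_tail P u \<le> ennreal d" and d: "0 \<le> d"
  shows "Hs_eps P n \<epsilon> \<le> SW_exp_length P n \<phi> +
     ereal (c + real n / \<epsilon> * (u * ((SW_error P n \<phi> \<psi> + 2 powr (- c)) / \<epsilon>) + d))"
proof -
  define q where "q = (SW_error P n \<phi> \<psi> + 2 powr (- c)) / \<epsilon>"
  have q: "0 \<le> q" using eps by (simp add: q_def SW_error_def)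
  define bad where "bad = {x. cond_tail P n x (real (length (\<phi> x)) + c) > ennreal \<epsilon>}"
  define L where "L = (\<integral>\<^sup>+ xy. ennreal (real (length (\<phi> (fst xy)))) \<partial>measure_pmf (P n))"
  have "emeasure (measure_pmf (P n)) (fst -` bad) \<le> ennreal q"
    using prob_cond_tail_exceeds_code_length[OF code eps(1), of c \<psi>]
    by (simp add: bad_def q_def)
  then have "ennreal u * emeasure (measure_pmf (P n)) (fst -` bad) + info_tail P u \<le> ennreal u * ennreal q + ennreal d"
    using u(2) by (intro add_mono mult_left_mono) simp_all
  then have tail: "(\<integral>\<^sup>+ x. ennreal (pmf (pX P n) x) * (cond_self_info P n x * indicator bad x) \<partial>count_space UNIV)
      \<le> ennreal (real n) * (ennreal u * ennreal q + ennreal d)"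
    unfolding nn_integral_pmf_fst_cond_self_info nn_integral_self_info_eq[OF n]
    using nn_integral_info_density_le_info_tail[OF n, of P "fst -` bad" u]
    by (intro mult_left_mono) simp_all
  have "(\<integral>\<^sup>+ x. ennreal (pmf (pX P n) x * hbar P n \<epsilon> x) \<partial>count_space {x. length x = n})
      \<le> L + ennreal c + ennreal (1/\<epsilon>) * (ennreal (real n) * (ennreal u * ennreal q + ennreal d))"
    using nn_integral_hbar_le_code_length[OF n eps c, where \<phi>=\<phi>] tail
    unfolding L_def bad_def[symmetric] by (auto elim!: order_trans intro!: add_left_mono mult_left_mono)
  also have "\<dots> = L + ennreal (c + real n / \<epsilon> * (u * q + d))"
    using eps c u q d
    by (simp add: ennreal_mult'[symmetric] ennreal_plus[symmetric] add.assoc del: ennreal_plus)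
  finally have "enn2ereal (\<integral>\<^sup>+ x. ennreal (pmf (pX P n) x * hbar P n \<epsilon> x) \<partial>count_space {x. length x = n})
      \<le> enn2ereal L + ereal (c + real n / \<epsilon> * (u * q + d))"
    using eps c u q d by (simp add: less_eq_ennreal.rep_eq plus_ennreal.rep_eq)
  then show ?thesis unfolding Hs_eps_def SW_exp_length_def L_def q_def .
qed

end

definition Hs_rate :: "(nat \<Rightarrow> ('a list \<times> 'b list) pmf) \<Rightarrow> real \<Rightarrow> ereal" where
  "Hs_rate P \<epsilon> = limsup (\<lambda>n. ereal (1 / real n) * Hs_eps P n \<epsilon>)"

lemma Hs_rate_nonneg: "0 \<le> Hs_rate P \<epsilon>"
  unfolding Hs_rate_def by (rule le_Limsup) (simp_all add: Hs_eps_def)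

lemma ereal_inverse_mult_le_add:
  assumes "1 \<le> n" "A \<le> B + ereal (real n * k)" "0 \<le> B"
  shows "ereal (1 / real n) * A \<le> ereal (1 / real n) * B + ereal k"
proof -
  have "ereal (1 / real n) * A \<le> ereal (1 / real n) * (B + ereal (real n * k))"
    using assms(2) by (intro ereal_mult_left_mono) simp_all
  also have "\<dots> = ereal (1 / real n) * B + ereal k"
    using assms(1) by (subst ereal_pos_distrib) simp_all
  finally show ?thesis .
qed

lemma powr_2_neg_linear_tendsto_0: "0 < g \<Longrightarrow> (\<lambda>n. (2::real) powr (- (g * real n))) \<longlonglongrightarrow> 0"
proof -
  assume g: "0 < g"
  have "(2::real) powr (- (g * real n)) = (2 powr (- g)) ^ n" for n
    by (simp add: powr_realpow[symmetric] powr_powr)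
  moreover have "(\<lambda>n. (2 powr (- g)) ^ n) \<longlonglongrightarrow> (0::real)"
    using g by (intro LIMSEQ_power_zero) (simp_all add: powr_less_one)
  ultimately show ?thesis by simp
qed

context ui_correlated_source
begin

text \<open>Given \<open>\<delta> > 0\<close>, take slack \<open>c = \<delta> n / 2\<close> and a truncation level \<open>u\<close> whose
  uniform-integrability tail is below \<open>\<epsilon> \<delta> / 2\<close>; the remainder per symbol then tends to \<open>\<delta>\<close>.\<close>

lemma Hs_rate_le_achievable_rate:
  assumes ach: "weakly_achievable P R" and eps: "0 < \<epsilon>" "\<epsilon> < 1"
  shows "Hs_rate P \<epsilon> \<le> ereal R"
proof -
  obtain \<phi> \<psi> where code: "\<And>n. SW_code n (\<phi> n)"
    and err: "(\<lambda>n. SW_error P n (\<phi> n) (\<psi> n)) \<longlonglongrightarrow> 0"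
    and rate: "limsup (\<lambda>n. ereal (1 / real n) * SW_exp_length P n (\<phi> n)) \<le> ereal R"
    using ach unfolding weakly_achievable_def by blast
  show ?thesis
  proof (rule ereal_le_epsilon2)
    fix \<delta> :: real assume "0 < \<delta>"
    define \<gamma> where "\<gamma> = \<delta> / 2"
    define d where "d = \<epsilon> * \<delta> / 2"
    have \<gamma>: "0 < \<gamma>" and d: "0 < d" using \<open>0 < \<delta>\<close> eps by (simp_all add: \<gamma>_def d_def)
    obtain U where "\<forall>u\<ge>U. info_tail P u < ennreal d" using ex_info_tail_less[of "ennreal d"] d by auto
    then obtain u where u: "0 \<le> u" "info_tail P u \<le> ennreal d"
      by (metis less_imp_le max.cobounded1 max.cobounded2)
    define r where "r n = \<gamma> + (1/\<epsilon>) * (u * ((SW_error P n (\<phi> n) (\<psi> n) + 2 powr (- (\<gamma> * real n))) / \<epsilon>) + d)"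
      for n
    have bound: "ereal (1 / real n) * Hs_eps P n \<epsilon> \<le> ereal (1 / real n) * SW_exp_length P n (\<phi> n) + ereal (r n)"
      if n: "1 \<le> n" for n
    proof (rule ereal_inverse_mult_le_add[OF n])
      show "Hs_eps P n \<epsilon> \<le> SW_exp_length P n (\<phi> n) + ereal (real n * r n)"
        using Hs_eps_le_exp_length[OF n code eps _ u, of "\<gamma> * real n" "\<psi> n"] \<gamma> d
        by (simp add: r_def algebra_simps)
    qed (simp add: SW_exp_length_def)
    have "r \<longlonglongrightarrow> \<gamma> + (1/\<epsilon>) * (u * ((0 + 0) / \<epsilon>) + d)"
      unfolding r_def using err powr_2_neg_linear_tendsto_0[OF \<gamma>] eps
      by (intro tendsto_intros) simp_all
    then have "(\<lambda>n. ereal (r n)) \<longlonglongrightarrow> ereal \<delta>"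
      using eps by (simp add: \<gamma>_def d_def)
    then have "limsup (\<lambda>n. ereal (r n)) = ereal \<delta>"
      by (rule lim_imp_Limsup[rotated]) simp
    have "Hs_rate P \<epsilon> \<le> limsup (\<lambda>n. ereal (1 / real n) * SW_exp_length P n (\<phi> n) + ereal (r n))"
      unfolding Hs_rate_def
      by (rule Limsup_mono) (use bound in \<open>auto simp: eventually_sequentially\<close>)
    also have "\<dots> \<le> limsup (\<lambda>n. ereal (1 / real n) * SW_exp_length P n (\<phi> n)) + limsup (\<lambda>n. ereal (r n))"
      by (rule ereal_limsup_add_mono)
    also have "\<dots> = limsup (\<lambda>n. ereal (1 / real n) * SW_exp_length P n (\<phi> n)) + ereal \<delta>"
      using \<open>limsup (\<lambda>n. ereal (r n)) = ereal \<delta>\<close> by simp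
    also have "\<dots> \<le> ereal R + ereal \<delta>"
      using rate by (rule add_right_mono)
    finally show "Hs_rate P \<epsilon> \<le> ereal R + ereal \<delta>" .
  qed
qed

lemma Hs_eps_antimono:
  assumes n: "1 \<le> n" and "0 < \<epsilon>\<^sub>1" "\<epsilon>\<^sub>1 \<le> \<epsilon>\<^sub>2" "\<epsilon>\<^sub>2 < 1"
  shows "Hs_eps P n \<epsilon>\<^sub>2 \<le> Hs_eps P n \<epsilon>\<^sub>1"
proof -
  have "(\<integral>\<^sup>+ x. ennreal (pmf (pX P n) x * hbar P n \<epsilon>\<^sub>2 x) \<partial>count_space {x. length x = n})
     \<le> (\<integral>\<^sup>+ x. ennreal (pmf (pX P n) x * hbar P n \<epsilon>\<^sub>1 x) \<partial>count_space {x. length x = n})"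
  proof (intro nn_integral_mono ennreal_leI mult_left_mono)
    fix x assume "x \<in> space (count_space {x::'a list. length x = n})"
    then have "length x = n" by simp
    then show "hbar P n \<epsilon>\<^sub>2 x \<le> hbar P n \<epsilon>\<^sub>1 x"
      using assms by (intro hbar_antimono pmf_fst_pos cond_self_info_finite[OF n])
  qed simp
  then show ?thesis unfolding Hs_eps_def by (simp add: less_eq_ennreal.rep_eq[symmetric])
qed

lemma Hs_rate_antimono:
  assumes "0 < \<epsilon>\<^sub>1" "\<epsilon>\<^sub>1 \<le> \<epsilon>\<^sub>2" "\<epsilon>\<^sub>2 < 1"
  shows "Hs_rate P \<epsilon>\<^sub>2 \<le> Hs_rate P \<epsilon>\<^sub>1"
  unfolding Hs_rate_def
  by (rule Limsup_mono, unfold eventually_sequentially)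
     (intro exI[of _ 1] allI impI ereal_mult_left_mono Hs_eps_antimono assms; simp)

lemma Hs_bar_eq_SUP_Hs_rate: "Hs_bar P = (SUP \<epsilon>\<in>{0<..<1}. Hs_rate P \<epsilon>)"
proof -
  define S where "S = (SUP \<epsilon>\<in>{0<..<1::real}. Hs_rate P \<epsilon>)"
  have "(Hs_rate P \<longlongrightarrow> S) (at_right 0)"
  proof (rule order_tendstoI)
    fix a assume "a < S"
    then obtain \<epsilon>\<^sub>0 where \<epsilon>\<^sub>0: "\<epsilon>\<^sub>0 \<in> {0<..<1}" "a < Hs_rate P \<epsilon>\<^sub>0"
      unfolding S_def less_SUP_iff by blast
    show "eventually (\<lambda>\<epsilon>. a < Hs_rate P \<epsilon>) (at_right 0)"
      unfolding eventually_at_right_field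
      using \<epsilon>\<^sub>0 Hs_rate_antimono[of _ \<epsilon>\<^sub>0] by (intro exI[of _ \<epsilon>\<^sub>0]) (auto intro: less_le_trans)
  next
    fix a assume "S < a"
    moreover have "Hs_rate P \<epsilon> \<le> S" if "0 < \<epsilon>" "\<epsilon> < 1" for \<epsilon>
      unfolding S_def using that by (intro SUP_upper) simp
    ultimately show "eventually (\<lambda>\<epsilon>. Hs_rate P \<epsilon> < a) (at_right 0)"
      unfolding eventually_at_right_field by (intro exI[of _ 1]) (auto intro: le_less_trans)
  qed
  then show ?thesis unfolding Hs_bar_def Hs_rate_def[abs_def] S_def
    by (rule tendsto_Lim[rotated]) simp
qed

end

section \<open>Random binning\<close>

lemma unary_prefix_eqD:
  "replicate j\<^sub>1 True @ False # b\<^sub>1 = replicate j\<^sub>2 True @ False # b\<^sub>2 \<Longrightarrow> j\<^sub>1 = j\<^sub>2 \<and> b\<^sub>1 = b\<^sub>2"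
proof (induction j\<^sub>1 arbitrary: j\<^sub>2)
  case 0 then show ?case by (cases j\<^sub>2) auto
next
  case (Suc j\<^sub>1) then show ?case by (cases j\<^sub>2) auto
qed

lemma unary_prefix_not_strict_prefix:
  assumes "strict_prefix (replicate j\<^sub>1 True @ False # b\<^sub>1) (replicate j\<^sub>2 True @ False # b\<^sub>2)"
    and "length b\<^sub>1 = G j\<^sub>1" "length b\<^sub>2 = G j\<^sub>2"
  shows False
  using assms
proof (induction j\<^sub>1 arbitrary: j\<^sub>2 G)
  case 0
  show ?case
  proof (cases j\<^sub>2)
    case 0
    with "0.prems" have "strict_prefix b\<^sub>1 b\<^sub>2" "length b\<^sub>1 = length b\<^sub>2" by auto
    then show False using prefix_length_less by fastforce
  qed (use "0.prems"(1) in \<open>simp add: strict_prefix_def\<close>)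
next
  case (Suc j\<^sub>1)
  then obtain j\<^sub>2' where "j\<^sub>2 = Suc j\<^sub>2'" by (cases j\<^sub>2) (auto simp: strict_prefix_def)
  with Suc.prems show False
    by (intro Suc.IH[of j\<^sub>2' "G \<circ> Suc"]) (auto simp: strict_prefix_def)
qed

lemma exists_finite_prob_compl_le:
  fixes p :: "'a::countable pmf"
  assumes "0 < \<eta>"
  shows "\<exists>F. finite F \<and> measure_pmf.prob p (- F) \<le> \<eta>"
proof -
  define A where "A N = {x::'a. N \<le> to_nat x}" for N
  have "(\<lambda>N. measure_pmf.prob p (A N)) \<longlonglongrightarrow> measure_pmf.prob p (\<Inter>N. A N)"
    by (rule measure_pmf.finite_Lim_measure_decseq) (auto simp: A_def decseq_def)
  moreover have "(\<Inter>N. A N) = {}" unfolding A_def by auto (metis Suc_n_not_le_n)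
  ultimately have "eventually (\<lambda>N. measure_pmf.prob p (A N) < \<eta>) sequentially"
    using assms by (intro order_tendstoD(2)) simp_all
  then obtain N where N: "measure_pmf.prob p (A N) < \<eta>" by (auto simp: eventually_sequentially)
  have "finite (to_nat -` {..<N} :: 'a set)" by (rule finite_vimageI) simp_all
  moreover have "- (to_nat -` {..<N}) = A N" unfolding A_def by auto
  ultimately show ?thesis using N by (intro exI[of _ "to_nat -` {..<N}"]) simp
qed

lemma emeasure_uniform_bool_lists_padded_eq_le:
  "emeasure (measure_pmf (pmf_of_set {v::bool list. length v = L})) {v. w = take L (v @ replicate L False)}
     \<le> ennreal ((1/2) ^ L)"
proof -
  let ?S = "{v::bool list. length v = L}"
  have fin: "finite ?S" and ne: "?S \<noteq> {}"
    using finite_lists_length_eq[of "UNIV::bool set" L] by (auto intro: exI[of _ "replicate L False"])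
  have card: "card ?S = 2 ^ L" using card_lists_length_eq[of "UNIV::bool set" L] by simp
  have "card (?S \<inter> {v. w = take L (v @ replicate L False)}) \<le> card {w}"
    by (rule card_mono) auto
  then have "real (card (?S \<inter> {v. w = take L (v @ replicate L False)})) / 2 ^ L \<le> 1 / 2 ^ L"
    by (intro divide_right_mono) simp_all
  then show ?thesis
    by (simp add: emeasure_pmf_of_set[OF ne fin] card ennreal_of_nat_eq_real_of_nat divide_ennreal
        power_one_over ennreal_leI)
qed

text \<open>The bin of \<open>x\<close> is independent of the other bins, which determine \<open>V\<close>.\<close>

lemma Pi_pmf_uniform_bins_hit_le:
  fixes L :: "'a \<Rightarrow> nat" and V :: "('a \<Rightarrow> bool list) \<Rightarrow> bool list"
  assumes fin: "finite F" and x: "x \<in> F" and V: "\<And>g v. V (g(x := v)) = V g"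
  shows "emeasure (measure_pmf (Pi_pmf F [] (\<lambda>z. pmf_of_set {v. length v = L z})))
           {f. V f = take (L x) (f x @ replicate (L x) False)} \<le> ennreal ((1/2) ^ L x)"
proof -
  define q where "q z = pmf_of_set {v::bool list. length v = L z}" for z
  define E where "E = {f. V f = take (L x) (f x @ replicate (L x) False)}"
  have "Pi_pmf F [] q = map_pmf (\<lambda>(v, g). g(x := v)) (pair_pmf (q x) (Pi_pmf (F - {x}) [] q))"
    using fin x Pi_pmf_insert[of "F - {x}" x "[]" q] by (simp add: insert_absorb)
  then have "emeasure (measure_pmf (Pi_pmf F [] q)) E =
      (\<integral>\<^sup>+ v. \<integral>\<^sup>+ g. indicator E (g(x := v)) \<partial>measure_pmf (Pi_pmf (F - {x}) [] q) \<partial>measure_pmf (q x))"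
    by (simp add: nn_integral_indicator[symmetric] nn_integral_pair_pmf' case_prod_unfold indicator_vimage
        del: nn_integral_indicator)
  also have "\<dots> = (\<integral>\<^sup>+ g. emeasure (measure_pmf (q x)) {v. V g = take (L x) (v @ replicate (L x) False)}
                    \<partial>measure_pmf (Pi_pmf (F - {x}) [] q))"
    by (subst nn_integral_measure_pmf_swap) (simp add: E_def V indicator_def nn_integral_indicator[symmetric]
        del: nn_integral_indicator)
  also have "\<dots> \<le> (\<integral>\<^sup>+ g. ennreal ((1/2) ^ L x) \<partial>measure_pmf (Pi_pmf (F - {x}) [] q))"
    unfolding q_def by (intro nn_integral_mono emeasure_uniform_bool_lists_padded_eq_le)
  also have "\<dots> = ennreal ((1/2) ^ L x)" by simp
  finally show ?thesis unfolding q_def[abs_def] E_def .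
qed

lemma exists_diagonal_sequence:
  fixes Q :: "nat \<Rightarrow> nat \<Rightarrow> bool"
  assumes ev: "\<And>k. eventually (\<lambda>n. Q k n) sequentially"
  shows "\<exists>\<kappa>. filterlim \<kappa> at_top sequentially \<and> eventually (\<lambda>n. Q (\<kappa> n) n) sequentially"
proof -
  have "\<exists>N. \<forall>n\<ge>N. \<forall>j\<le>k. Q j n" for k
  proof -
    have "eventually (\<lambda>n. \<forall>j\<in>{..k}. Q j n) sequentially"
      by (rule eventually_ball_finite) (auto intro: ev)
    then show ?thesis by (auto simp: eventually_sequentially)
  qed
  then obtain N where N: "\<And>k n j. N k \<le> n \<Longrightarrow> j \<le> k \<Longrightarrow> Q j n" by metis
  define \<kappa> where "\<kappa> n = Max {k. k \<le> n \<and> N k \<le> n}" for n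
  have fin: "finite {k. k \<le> n \<and> N k \<le> n}" for n by simp
  have "filterlim \<kappa> at_top sequentially"
    unfolding filterlim_at_top eventually_sequentially
  proof (intro allI exI[of _ "max (N 0) _"] impI)
    fix K n assume "max (N 0) (max K (N K)) \<le> n"
    then show "K \<le> \<kappa> n" unfolding \<kappa>_def by (intro Max_ge[OF fin]) auto
  qed
  moreover have "N (\<kappa> n) \<le> n" if "N 0 \<le> n" for n
    using Max_in[OF fin, of n] that by (auto simp: \<kappa>_def)
  then have "eventually (\<lambda>n. Q (\<kappa> n) n) sequentially"
    unfolding eventually_sequentially using N by blast
  ultimately show ?thesis by blast
qed

text \<open>Bins are drawn as a function \<open>f\<close> from a product measure; the padding
  makes bin words of the right length also where \<open>f\<close> is the default \<open>[]\<close>.\<close>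

context
  fixes P :: "nat \<Rightarrow> ('a list \<times> 'b list) pmf" and n :: nat and \<epsilon> :: real and t :: nat
begin

definition level :: "'a list \<Rightarrow> nat" where
  "level x = nat \<lceil>(hbar P n \<epsilon> x + 1) / real t\<rceil>"

definition bin_length :: "'a list \<Rightarrow> nat" where
  "bin_length x = (level x + 1) * t"

definition candidate :: "'a list \<Rightarrow> 'b list \<Rightarrow> bool" where
  "candidate x y \<longleftrightarrow> length x = n \<and> condXY P n x y \<ge> (1/2) ^ (level x * t)"

definition bin_word :: "('a list \<Rightarrow> bool list) \<Rightarrow> 'a list \<Rightarrow> bool list" where
  "bin_word f x = take (bin_length x) (f x @ replicate (bin_length x) False)"

definition bin_encode :: "('a list \<Rightarrow> bool list) \<Rightarrow> 'a list \<Rightarrow> bool list" where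
  "bin_encode f x = replicate (level x) True @ False # bin_word f x"

definition bin_decode :: "('a list \<Rightarrow> bool list) \<Rightarrow> bool list \<Rightarrow> 'b list \<Rightarrow> 'a list" where
  "bin_decode f c y = (SOME x'. bin_encode f x' = c \<and> candidate x' y)"

definition bin_collisions :: "'a list set \<Rightarrow> ('a list \<Rightarrow> bool list) \<Rightarrow> ('a list \<times> 'b list) set" where
  "bin_collisions F f = {(x, y). x \<in> F \<and>
     (\<exists>x'. x' \<noteq> x \<and> level x' = level x \<and> bin_word f x' = bin_word f x \<and> candidate x' y)}"

lemma length_bin_word: "length (bin_word f x) = bin_length x"
  by (simp add: bin_word_def)

lemma length_bin_encode: "length (bin_encode f x) = (level x + 1) * (t + 1)"
  by (simp add: bin_encode_def length_bin_word bin_length_def algebra_simps)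

lemma SW_code_bin_encode: "SW_code n (bin_encode f)"
  unfolding SW_code_def prefix_free_def
proof (intro ballI notI)
  fix u v assume "u \<in> bin_encode f ` {x. length x = n}" "v \<in> bin_encode f ` {x. length x = n}"
    and "strict_prefix u v"
  then obtain x x' where "strict_prefix (replicate (level x) True @ False # bin_word f x)
      (replicate (level x') True @ False # bin_word f x')"
    by (auto simp: bin_encode_def)
  then show False
    by (rule unary_prefix_not_strict_prefix[where G="\<lambda>j. (j + 1) * t"])
       (simp_all add: length_bin_word bin_length_def)
qed

lemma bin_decode_bin_encode:
  assumes "candidate x y" and "(x, y) \<notin> bin_collisions F f" and "x \<in> F"
  shows "bin_decode f (bin_encode f x) y = x"
  unfolding bin_decode_def
proof (rule some_equality)
  fix x' assume x': "bin_encode f x' = bin_encode f x \<and> candidate x' y"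
  then have "level x' = level x" "bin_word f x' = bin_word f x"
    using unary_prefix_eqD[of "level x'" "bin_word f x'" "level x"] by (simp_all add: bin_encode_def)
  with x' assms show "x' = x" unfolding bin_collisions_def by blast
qed (use assms in simp)

lemma bin_decode_error_subset:
  "{(x, y). bin_decode f (bin_encode f x) y \<noteq> x}
     \<subseteq> {(x, y). \<not> candidate x y} \<union> {(x, y). x \<notin> F} \<union> bin_collisions F f"
proof
  fix z assume "z \<in> {(x, y). bin_decode f (bin_encode f x) y \<noteq> x}"
  then obtain x y where "z = (x, y)" "bin_decode f (bin_encode f x) y \<noteq> x" by auto
  then show "z \<in> {(x, y). \<not> candidate x y} \<union> {(x, y). x \<notin> F} \<union> bin_collisions F f"
    using bin_decode_bin_encode[of x y F f] by auto
qed

lemma level_mult_ge: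
  assumes "0 \<le> hbar P n \<epsilon> x" "1 \<le> t"
  shows "hbar P n \<epsilon> x + 1 \<le> real (level x * t)"
proof -
  have "(hbar P n \<epsilon> x + 1) / real t \<le> real (level x)"
    using assms by (simp add: level_def)
  then show ?thesis using assms(2) by (simp add: field_simps)
qed

lemma level_le:
  assumes "0 \<le> hbar P n \<epsilon> x" "1 \<le> t"
  shows "real (level x) \<le> (hbar P n \<epsilon> x + 1) / real t + 1"
  using assms by (simp add: level_def)

lemma length_bin_encode_le:
  assumes "0 \<le> hbar P n \<epsilon> x" "1 \<le> t"
  shows "real (length (bin_encode f x)) \<le>
    (real t + 1) / real t * hbar P n \<epsilon> x + ((real t + 1) / real t + 2 * (real t + 1))"
proof -
  have "real (length (bin_encode f x)) = (real (level x) + 1) * (real t + 1)"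
    by (simp add: length_bin_encode algebra_simps)
  also have "\<dots> \<le> ((hbar P n \<epsilon> x + 1) / real t + 2) * (real t + 1)"
    using level_le[OF assms] by (intro mult_right_mono) simp_all
  also have "\<dots> = (real t + 1) / real t * hbar P n \<epsilon> x + ((real t + 1) / real t + 2 * (real t + 1))"
    using assms(2) by (simp add: field_simps)
  finally show ?thesis .
qed

end

definition random_bins :: "(nat \<Rightarrow> ('a list \<times> 'b list) pmf) \<Rightarrow> nat \<Rightarrow> real \<Rightarrow> nat \<Rightarrow> 'a list set
    \<Rightarrow> ('a list \<Rightarrow> bool list) pmf" where
  "random_bins P n \<epsilon> t F = Pi_pmf F [] (\<lambda>x. pmf_of_set {v. length v = bin_length P n \<epsilon> t x})"

lemma condXY_pos_if_condYX_pos: "condYX P n y x > 0 \<Longrightarrow> condXY P n x y > 0"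
  using pmf_le_pmf_snd[of "P n" x y] pmf_nonneg[of "P n" "(x, y)"]
  by (auto simp: condYX_def condXY_def zero_less_divide_iff)

lemma self_info_gt_if_not_candidate:
  assumes "length x = n" "condXY P n x y > 0" "\<not> candidate P n \<epsilon> t x y"
  shows "self_info P n x y > real (level P n \<epsilon> t x * t)"
proof -
  have "(2::real) powr real (level P n \<epsilon> t x * t) = 2 ^ (level P n \<epsilon> t x * t)"
    by (rule powr_realpow) simp
  then have "(1/2::real) ^ (level P n \<epsilon> t x * t) = 2 powr (- real (level P n \<epsilon> t x * t))"
    by (simp add: powr_minus power_one_over inverse_eq_divide)
  with assms show ?thesis by (simp add: candidate_def self_info_gt_iff not_le)
qed

context ui_correlated_source
begin

text \<open>The level is chosen above \<open>hbar\<close>, so the conditional tail at the level is at most \<open>\<epsilon>\<close>.\<close>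

lemma cond_prob_not_candidate_le:
  assumes n: "1 \<le> n" and eps: "0 < \<epsilon>" "\<epsilon> < 1" and t: "1 \<le> t" and px: "pmf (pX P n) x > 0"
  shows "(\<integral>\<^sup>+ y. ennreal (condYX P n y x) * indicator {(x, y). \<not> candidate P n \<epsilon> t x y} (x, y)
           \<partial>count_space UNIV) \<le> ennreal \<epsilon>"
proof -
  have len: "length x = n" by (rule length_if_pmf_fst_pos[OF px])
  have fin: "cond_self_info P n x < \<infinity>" by (rule cond_self_info_finite[OF n len])
  define a where "a = real (level P n \<epsilon> t x * t)"
  have "hbar P n \<epsilon> x < a"
    using level_mult_ge[OF hbar_nonneg[OF px eps fin] t] by (simp add: a_def)
  then have tail: "cond_tail P n x a \<le> ennreal \<epsilon>" by (rule cond_tail_le_above_hbar[OF px eps fin])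
  have "(\<integral>\<^sup>+ y. ennreal (condYX P n y x) * indicator {(x, y). \<not> candidate P n \<epsilon> t x y} (x, y)
           \<partial>count_space UNIV) \<le> cond_tail P n x a"
    unfolding cond_tail_eq_indicator
  proof (intro nn_integral_mono)
    fix y
    show "ennreal (condYX P n y x) * indicator {(x, y). \<not> candidate P n \<epsilon> t x y} (x, y) \<le>
        ennreal (condYX P n y x) * indicator {y. a < self_info P n x y} y"
      using self_info_gt_if_not_candidate[OF len condXY_pos_if_condYX_pos, of P y \<epsilon> t]
        condYX_nonneg[of P n y x]
      by (cases "condYX P n y x = 0") (auto simp: a_def split: split_indicator)
  qed
  then show ?thesis using tail by (rule order_trans)
qed

lemma prob_not_candidate_le:
  assumes n: "1 \<le> n" and eps: "0 < \<epsilon>" "\<epsilon> < 1" and t: "1 \<le> t"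
  shows "emeasure (measure_pmf (P n)) {(x, y). \<not> candidate P n \<epsilon> t x y} \<le> ennreal \<epsilon>"
proof -
  let ?N = "{(x, y). \<not> candidate P n \<epsilon> t x y}"
  have "emeasure (measure_pmf (P n)) ?N = (\<integral>\<^sup>+ z. indicator ?N z \<partial>measure_pmf (P n))"
    by (rule nn_integral_indicator[symmetric]) simp
  also have "\<dots> \<le> (\<integral>\<^sup>+ x. ennreal (pmf (pX P n) x) * ennreal \<epsilon> \<partial>count_space UNIV)"
  proof (subst nn_integral_source_condYX, intro nn_integral_mono)
    fix x
    show "ennreal (pmf (pX P n) x) *
        (\<integral>\<^sup>+ y. ennreal (condYX P n y x) * indicator ?N (x, y) \<partial>count_space UNIV)
        \<le> ennreal (pmf (pX P n) x) * ennreal \<epsilon>"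
    proof (cases "pmf (pX P n) x > 0")
      case True
      then show ?thesis by (intro mult_left_mono cond_prob_not_candidate_le[OF n eps t]) simp_all
    next
      case False
      then have "pmf (pX P n) x = 0" using pmf_nonneg[of "pX P n" x] by linarith
      then show ?thesis by simp
    qed
  qed
  also have "\<dots> = ennreal \<epsilon>" by (simp add: nn_integral_multc nn_integral_pmf)
  finally show ?thesis .
qed

end

definition confusers :: "(nat \<Rightarrow> ('a list \<times> 'b list) pmf) \<Rightarrow> nat \<Rightarrow> real \<Rightarrow> nat \<Rightarrow> 'a list \<Rightarrow> 'b list
    \<Rightarrow> 'a list set" where
  "confusers P n \<epsilon> t x y = {x'. x' \<noteq> x \<and> level P n \<epsilon> t x' = level P n \<epsilon> t x \<and> candidate P n \<epsilon> t x' y}"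

lemma indicator_bin_collisions_le:
  "indicator (bin_collisions P n \<epsilon> t F f) (x, y) \<le> indicator F x *
     (\<integral>\<^sup>+ x'. indicator (confusers P n \<epsilon> t x y) x' *
        indicator {f. bin_word P n \<epsilon> t f x' = bin_word P n \<epsilon> t f x} f \<partial>count_space UNIV)"
proof (cases "(x, y) \<in> bin_collisions P n \<epsilon> t F f")
  case True
  then obtain x' where "x \<in> F" "x' \<in> confusers P n \<epsilon> t x y"
    "bin_word P n \<epsilon> t f x' = bin_word P n \<epsilon> t f x"
    by (auto simp: bin_collisions_def confusers_def)
  then show ?thesis
    using nn_integral_ge_point[of x' UNIV "\<lambda>x'. indicator (confusers P n \<epsilon> t x y) x' *
        indicator {f. bin_word P n \<epsilon> t f x' = bin_word P n \<epsilon> t f x} f :: ennreal"] True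
    by simp
qed simp

text \<open>A confuser \<open>x'\<close> of level \<open>j\<close> shares the bin of \<open>x\<close> with probability
  \<open>2\<^sup>-\<^sup>(\<^sup>j\<^sup>+\<^sup>1\<^sup>)\<^sup>t \<le> 2\<^sup>-\<^sup>t P(x'|y)\<close>; summing over \<open>x'\<close> bounds the expected number of confusers by \<open>2\<^sup>-\<^sup>t\<close>.\<close>

lemma prob_same_bin_le:
  assumes fin: "finite F" and x: "x \<in> F" and x': "x' \<in> confusers P n \<epsilon> t x y"
  shows "emeasure (measure_pmf (random_bins P n \<epsilon> t F)) {f. bin_word P n \<epsilon> t f x' = bin_word P n \<epsilon> t f x}
     \<le> ennreal ((1/2) ^ t) * ennreal (condXY P n x' y)"
proof -
  have "x' \<noteq> x" and lv: "level P n \<epsilon> t x' = level P n \<epsilon> t x" and "candidate P n \<epsilon> t x' y"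
    using x' by (auto simp: confusers_def)
  have "emeasure (measure_pmf (random_bins P n \<epsilon> t F))
      {f. bin_word P n \<epsilon> t f x' = bin_word P n \<epsilon> t f x} \<le> ennreal ((1/2) ^ bin_length P n \<epsilon> t x)"
    unfolding random_bins_def bin_word_def[of P n \<epsilon> t _ x]
    by (rule Pi_pmf_uniform_bins_hit_le[OF fin x]) (use \<open>x' \<noteq> x\<close> in \<open>simp add: bin_word_def\<close>)
  also have "(1/2::real) ^ bin_length P n \<epsilon> t x = (1/2) ^ t * (1/2) ^ (level P n \<epsilon> t x' * t)"
    by (simp add: bin_length_def lv power_add[symmetric] algebra_simps)
  also have "ennreal \<dots> \<le> ennreal ((1/2) ^ t) * ennreal (condXY P n x' y)"
    using \<open>candidate P n \<epsilon> t x' y\<close>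
    by (simp add: candidate_def ennreal_mult[symmetric] condXY_nonneg ennreal_leI)
  finally show ?thesis .
qed

lemma expected_confusions_le:
  fixes P :: "nat \<Rightarrow> ('a::countable list \<times> 'b::countable list) pmf"
  assumes fin: "finite F" and x: "x \<in> F"
  shows "(\<integral>\<^sup>+ f. \<integral>\<^sup>+ x'. indicator (confusers P n \<epsilon> t x y) x' *
            indicator {f. bin_word P n \<epsilon> t f x' = bin_word P n \<epsilon> t f x} f \<partial>count_space UNIV
          \<partial>measure_pmf (random_bins P n \<epsilon> t F)) \<le> ennreal ((1/2) ^ t)"
proof -
  have "(\<integral>\<^sup>+ f. \<integral>\<^sup>+ x'. indicator (confusers P n \<epsilon> t x y) x' *
            indicator {f. bin_word P n \<epsilon> t f x' = bin_word P n \<epsilon> t f x} f \<partial>count_space UNIV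
          \<partial>measure_pmf (random_bins P n \<epsilon> t F)) =
      (\<integral>\<^sup>+ x'. \<integral>\<^sup>+ f. indicator (confusers P n \<epsilon> t x y) x' *
            indicator {f. bin_word P n \<epsilon> t f x' = bin_word P n \<epsilon> t f x} f
          \<partial>measure_pmf (random_bins P n \<epsilon> t F) \<partial>count_space UNIV)"
    by (rule nn_integral_count_space_nn_integral) simp_all
  also have "\<dots> \<le> (\<integral>\<^sup>+ x'. ennreal ((1/2) ^ t) * ennreal (condXY P n x' y) \<partial>count_space UNIV)"
  proof (intro nn_integral_mono)
    fix x'
    show "(\<integral>\<^sup>+ f. indicator (confusers P n \<epsilon> t x y) x' *
            indicator {f. bin_word P n \<epsilon> t f x' = bin_word P n \<epsilon> t f x} f \<partial>measure_pmf (random_bins P n \<epsilon> t F))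
        \<le> ennreal ((1/2) ^ t) * ennreal (condXY P n x' y)"
      using prob_same_bin_le[OF fin x, where x'=x' and y=y]
      by (cases "x' \<in> confusers P n \<epsilon> t x y") (simp_all add: nn_integral_cmult)
  qed
  also have "\<dots> \<le> ennreal ((1/2) ^ t)"
    using mult_left_mono[OF nn_integral_condXY_le_1[of P n y], of "ennreal ((1/2) ^ t)"]
    by (simp add: nn_integral_cmult)
  finally show ?thesis .
qed

lemma expected_prob_bin_collisions_le:
  fixes P :: "nat \<Rightarrow> ('a::countable list \<times> 'b::countable list) pmf"
  assumes "finite F"
  shows "(\<integral>\<^sup>+ f. emeasure (measure_pmf (P n)) (bin_collisions P n \<epsilon> t F f)
           \<partial>measure_pmf (random_bins P n \<epsilon> t F)) \<le> ennreal ((1/2) ^ t)"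
proof -
  let ?\<mu> = "measure_pmf (random_bins P n \<epsilon> t F)"
  let ?C = "\<lambda>f x y. \<integral>\<^sup>+ x'. indicator (confusers P n \<epsilon> t x y) x' *
     indicator {f. bin_word P n \<epsilon> t f x' = bin_word P n \<epsilon> t f x} f \<partial>count_space UNIV"
  have "(\<integral>\<^sup>+ f. emeasure (measure_pmf (P n)) (bin_collisions P n \<epsilon> t F f) \<partial>?\<mu>)
      \<le> (\<integral>\<^sup>+ f. \<integral>\<^sup>+ xy. indicator F (fst xy) * ?C f (fst xy) (snd xy) \<partial>measure_pmf (P n) \<partial>?\<mu>)"
    by (intro nn_integral_mono)
       (auto simp: nn_integral_indicator[symmetric] indicator_bin_collisions_le intro!: nn_integral_mono
         simp del: nn_integral_indicator)
  also have "\<dots> = (\<integral>\<^sup>+ xy. \<integral>\<^sup>+ f. indicator F (fst xy) * ?C f (fst xy) (snd xy) \<partial>?\<mu> \<partial>measure_pmf (P n))"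
    by (rule nn_integral_measure_pmf_swap)
  also have "\<dots> \<le> (\<integral>\<^sup>+ xy. ennreal ((1/2) ^ t) \<partial>measure_pmf (P n))"
    using expected_confusions_le[OF assms]
    by (intro nn_integral_mono) (auto simp: nn_integral_cmult split: split_indicator)
  finally show ?thesis by simp
qed

lemma exists_bins_few_collisions:
  fixes P :: "nat \<Rightarrow> ('a::countable list \<times> 'b::countable list) pmf"
  assumes "finite F" "0 < \<eta>"
  shows "\<exists>f. emeasure (measure_pmf (P n)) (bin_collisions P n \<epsilon> t F f) \<le> ennreal ((1/2) ^ t + \<eta>)"
proof (rule ccontr)
  assume "\<not> ?thesis"
  then have "ennreal ((1/2) ^ t + \<eta>) \<le> emeasure (measure_pmf (P n)) (bin_collisions P n \<epsilon> t F f)" for f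
    by (meson linear)
  then have "(\<integral>\<^sup>+ f. ennreal ((1/2) ^ t + \<eta>) \<partial>measure_pmf (random_bins P n \<epsilon> t F)) \<le>
      (\<integral>\<^sup>+ f. emeasure (measure_pmf (P n)) (bin_collisions P n \<epsilon> t F f) \<partial>measure_pmf (random_bins P n \<epsilon> t F))"
    by (intro nn_integral_mono)
  then have "ennreal ((1/2) ^ t + \<eta>) \<le>
      (\<integral>\<^sup>+ f. emeasure (measure_pmf (P n)) (bin_collisions P n \<epsilon> t F f) \<partial>measure_pmf (random_bins P n \<epsilon> t F))"
    by simp
  also have "\<dots> \<le> ennreal ((1/2) ^ t)" by (rule expected_prob_bin_collisions_le[OF assms(1)])
  finally show False using assms(2) by (simp add: ennreal_le_iff)
qed

context ui_correlated_source
begin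

lemma bin_code_error_le:
  assumes n: "1 \<le> n" and eps: "0 < \<epsilon>" "\<epsilon> < 1" and t: "1 \<le> t"
    and F: "measure_pmf.prob (pX P n) (- F) \<le> \<eta>"
    and f: "emeasure (measure_pmf (P n)) (bin_collisions P n \<epsilon> t F f) \<le> ennreal ((1/2) ^ t + \<eta>)"
  shows "SW_error P n (bin_encode P n \<epsilon> t f) (bin_decode P n \<epsilon> t f) \<le> \<epsilon> + (1/2) ^ t + 2 * \<eta>"
proof -
  let ?M = "measure_pmf (P n)"
  have \<eta>: "0 \<le> \<eta>" using F measure_nonneg order_trans by blast
  have "emeasure ?M {(x, y). x \<notin> F} = emeasure (measure_pmf (pX P n)) (- F)"
    by (simp add: emeasure_map_pmf vimage_def Compl_eq case_prod_unfold)
  also have "\<dots> \<le> ennreal \<eta>" using F by (simp add: measure_pmf.emeasure_eq_measure ennreal_leI)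
  finally have outside: "emeasure ?M {(x, y). x \<notin> F} \<le> ennreal \<eta>" .
  have "ennreal (SW_error P n (bin_encode P n \<epsilon> t f) (bin_decode P n \<epsilon> t f))
      = emeasure ?M {(x, y). bin_decode P n \<epsilon> t f (bin_encode P n \<epsilon> t f x) y \<noteq> x}"
    by (simp add: SW_error_def measure_pmf.emeasure_eq_measure)
  also have "\<dots> \<le> emeasure ?M ({(x, y). \<not> candidate P n \<epsilon> t x y} \<union> {(x, y). x \<notin> F}
      \<union> bin_collisions P n \<epsilon> t F f)"
    by (intro emeasure_mono bin_decode_error_subset) simp
  also have "\<dots> \<le> emeasure ?M {(x, y). \<not> candidate P n \<epsilon> t x y} + emeasure ?M {(x, y). x \<notin> F}
      + emeasure ?M (bin_collisions P n \<epsilon> t F f)"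
    by (intro order_trans[OF emeasure_subadditive] add_right_mono emeasure_subadditive) simp_all
  also have "\<dots> \<le> ennreal \<epsilon> + ennreal \<eta> + ennreal ((1/2) ^ t + \<eta>)"
    by (intro add_mono prob_not_candidate_le[OF n eps t] outside f)
  also have "\<dots> = ennreal (\<epsilon> + (1/2) ^ t + 2 * \<eta>)"
    using eps \<eta> by (simp add: ennreal_plus[symmetric] del: ennreal_plus)
  finally show ?thesis using eps \<eta> by (subst (asm) ennreal_le_iff) simp_all
qed

lemma bin_code_exp_length_le:
  assumes n: "1 \<le> n" and eps: "0 < \<epsilon>" "\<epsilon> < 1" and t: "1 \<le> t"
  shows "SW_exp_length P n (bin_encode P n \<epsilon> t f) \<le>
    ereal ((real t + 1) / real t) * Hs_eps P n \<epsilon> + ereal ((real t + 1) / real t + 2 * (real t + 1))"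
proof -
  define c where "c = (real t + 1) / real t"
  define c' where "c' = (real t + 1) / real t + 2 * (real t + 1)"
  have c: "0 \<le> c" "0 \<le> c'" by (simp_all add: c_def c'_def)
  have "(\<integral>\<^sup>+ xy. ennreal (real (length (bin_encode P n \<epsilon> t f (fst xy)))) \<partial>measure_pmf (P n))
      = (\<integral>\<^sup>+ x. ennreal (pmf (pX P n) x) * ennreal (real (length (bin_encode P n \<epsilon> t f x)))
           \<partial>count_space UNIV)"
    by (rule nn_integral_measure_pmf_fst)
  also have "\<dots> = (\<integral>\<^sup>+ x. ennreal (pmf (pX P n) x) * ennreal (real (length (bin_encode P n \<epsilon> t f x)))
           \<partial>count_space {x. length x = n})"
    using length_if_pmf_fst_pos pmf_nonneg[of "pX P n"]
    by (intro nn_integral_count_space_eq) (auto simp: le_less)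
  also have "\<dots> \<le> (\<integral>\<^sup>+ x. ennreal c * ennreal (pmf (pX P n) x * hbar P n \<epsilon> x) +
                     ennreal c' * ennreal (pmf (pX P n) x) \<partial>count_space {x. length x = n})"
  proof (intro nn_integral_mono)
    fix x assume "x \<in> space (count_space {x::'a list. length x = n})"
    then have len: "length x = n" by simp
    have h: "0 \<le> hbar P n \<epsilon> x"
      by (rule hbar_nonneg[OF pmf_fst_pos[OF len] eps cond_self_info_finite[OF n len]])
    have "real (length (bin_encode P n \<epsilon> t f x)) \<le> c * hbar P n \<epsilon> x + c'"
      unfolding c_def c'_def by (rule length_bin_encode_le[OF h t])
    then have "ennreal (pmf (pX P n) x * real (length (bin_encode P n \<epsilon> t f x)))
        \<le> ennreal (pmf (pX P n) x * (c * hbar P n \<epsilon> x + c'))"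
      by (intro ennreal_leI mult_left_mono) simp_all
    then show "ennreal (pmf (pX P n) x) * ennreal (real (length (bin_encode P n \<epsilon> t f x)))
        \<le> ennreal c * ennreal (pmf (pX P n) x * hbar P n \<epsilon> x) + ennreal c' * ennreal (pmf (pX P n) x)"
      using c h by (simp add: ennreal_mult[symmetric] ennreal_plus[symmetric] algebra_simps del: ennreal_plus)
  qed
  also have "\<dots> \<le> ennreal c * (\<integral>\<^sup>+ x. ennreal (pmf (pX P n) x * hbar P n \<epsilon> x) \<partial>count_space {x. length x = n})
      + ennreal c'"
    using mult_left_mono[OF nn_integral_count_space_subset_le[of "{x. length x = n}" UNIV
        "\<lambda>x. ennreal (pmf (pX P n) x)"], of "ennreal c'"]
    by (simp add: nn_integral_add nn_integral_cmult nn_integral_pmf add_left_mono)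
  finally have "SW_exp_length P n (bin_encode P n \<epsilon> t f) \<le> ereal c * Hs_eps P n \<epsilon> + ereal c'"
    using c unfolding SW_exp_length_def Hs_eps_def
    by (simp add: less_eq_ennreal.rep_eq plus_ennreal.rep_eq times_ennreal.rep_eq)
  then show ?thesis unfolding c_def c'_def .
qed

lemma exists_bin_code:
  assumes n: "1 \<le> n" and eps: "0 < \<epsilon>" "\<epsilon> < 1" and t: "1 \<le> t" and \<eta>: "0 < \<eta>"
  shows "\<exists>\<phi> \<psi>. SW_code n \<phi> \<and> SW_error P n \<phi> \<psi> \<le> \<epsilon> + (1/2) ^ t + 2 * \<eta> \<and>
     SW_exp_length P n \<phi> \<le>
       ereal ((real t + 1) / real t) * Hs_eps P n \<epsilon> + ereal ((real t + 1) / real t + 2 * (real t + 1))"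
proof -
  obtain F where "finite F" and F: "measure_pmf.prob (pX P n) (- F) \<le> \<eta>"
    using exists_finite_prob_compl_le[OF \<eta>] by blast
  then obtain f where "emeasure (measure_pmf (P n)) (bin_collisions P n \<epsilon> t F f) \<le> ennreal ((1/2) ^ t + \<eta>)"
    using exists_bins_few_collisions[OF _ \<eta>] by blast
  then show ?thesis
    using SW_code_bin_encode bin_code_error_le[OF n eps t F] bin_code_exp_length_le[OF n eps t] by blast
qed

end

section \<open>Achievability and the main theorem\<close>

lemma exists_code_sequence:
  assumes "\<And>n. 1 \<le> n \<Longrightarrow> \<exists>\<phi> \<psi>. SW_code n \<phi> \<and> Q n \<phi> \<psi>"
  shows "\<exists>\<phi> \<psi>. \<forall>n. SW_code n (\<phi> n) \<and> (1 \<le> n \<longrightarrow> Q n (\<phi> n) (\<psi> n))"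
proof -
  have "\<exists>\<phi>\<psi>. SW_code n (fst \<phi>\<psi>) \<and> (1 \<le> n \<longrightarrow> Q n (fst \<phi>\<psi>) (snd \<phi>\<psi>))" for n
  proof (cases "1 \<le> n")
    case True
    then show ?thesis using assms[of n] by auto
  next
    case False
    have "SW_code n (\<lambda>x. [])" by (simp add: SW_code_def prefix_free_def)
    with False show ?thesis by (intro exI[of _ "(\<lambda>x. [], undefined)"]) simp
  qed
  then obtain \<Phi> where "\<And>n. SW_code n (fst (\<Phi> n)) \<and> (1 \<le> n \<longrightarrow> Q n (fst (\<Phi> n)) (snd (\<Phi> n)))"
    by metis
  then show ?thesis by (intro exI[of _ "\<lambda>n. fst (\<Phi> n)"] exI[of _ "\<lambda>n. snd (\<Phi> n)"]) simp
qed

lemma normalized_bin_code_length_le: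
  fixes m \<tau> \<gamma> a :: real
  assumes m: "1 \<le> m" and \<gamma>: "0 < \<gamma>" and \<tau>: "\<gamma> * m \<le> \<tau>" "\<tau> \<le> \<gamma> * m + 1" and a: "0 \<le> a"
  shows "((\<tau> + 1) / \<tau> * (m * a) + ((\<tau> + 1) / \<tau> + 2 * (\<tau> + 1))) / m
    \<le> (1 + 1 / (\<gamma> * m)) * (a + 1 / m) + 2 * \<gamma> + 4 / m"
proof -
  have "0 < \<gamma> * m" using \<gamma> m by simp
  then have pos: "0 < \<tau>" "0 < m" using m \<tau>(1) by simp_all
  have "((\<tau> + 1) / \<tau> * (m * a) + ((\<tau> + 1) / \<tau> + 2 * (\<tau> + 1))) / m
      = (1 + 1 / \<tau>) * (a + 1 / m) + 2 * (\<tau> + 1) / m"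
    using pos by (simp add: field_simps)
  moreover have "(1 + 1 / \<tau>) * (a + 1 / m) \<le> (1 + 1 / (\<gamma> * m)) * (a + 1 / m)"
    using pos \<gamma> \<tau>(1) a by (intro mult_right_mono add_left_mono) (simp_all add: frac_le)
  moreover have "2 * (\<tau> + 1) / m \<le> (2 * \<gamma> * m + 4) / m"
    using pos \<tau>(2) by (intro divide_right_mono) simp_all
  moreover have "(2 * \<gamma> * m + 4) / m = 2 * \<gamma> + 4 / m"
    using pos by (simp add: field_simps)
  ultimately show ?thesis by linarith
qed

lemma binning_error_bound_tendsto_0:
  fixes \<kappa> \<tau> :: "nat \<Rightarrow> nat"
  assumes \<kappa>: "filterlim \<kappa> at_top sequentially" and \<gamma>: "0 < \<gamma>"
    and \<tau>: "\<And>n. 1 \<le> n \<Longrightarrow> \<gamma> * real n \<le> real (\<tau> n)"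
  shows "(\<lambda>n. 1 / (real (\<kappa> n) + 2) + (1/2) ^ \<tau> n + 2 * (1 / real n)) \<longlonglongrightarrow> 0"
proof (rule tendsto_sandwich[of "\<lambda>_. 0" _ _
    "\<lambda>n. 1 / (real (\<kappa> n) + 2) + 2 powr (- (\<gamma> * real n)) + 2 * (1 / real n)"])
  have pow: "(1/2::real) ^ \<tau> n \<le> 2 powr (- (\<gamma> * real n))" if "1 \<le> n" for n
  proof -
    have "(1/2::real) ^ \<tau> n = 2 powr (- real (\<tau> n))"
      by (simp add: powr_minus powr_realpow power_one_over inverse_eq_divide)
    also have "\<dots> \<le> 2 powr (- (\<gamma> * real n))" using \<tau>[OF that] by (intro powr_mono) simp_all
    finally show ?thesis .
  qed
  show "eventually (\<lambda>n. 1 / (real (\<kappa> n) + 2) + (1/2) ^ \<tau> n + 2 * (1 / real n) \<le>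
      1 / (real (\<kappa> n) + 2) + 2 powr (- (\<gamma> * real n)) + 2 * (1 / real n)) sequentially"
    unfolding eventually_sequentially using pow by (intro exI[of _ 1]) simp
  have "(\<lambda>n. 1 / (real (\<kappa> n) + 2)) \<longlonglongrightarrow> 0"
    by (rule filterlim_compose[OF _ \<kappa>]) real_asymp
  then show "(\<lambda>n. 1 / (real (\<kappa> n) + 2) + 2 powr (- (\<gamma> * real n)) + 2 * (1 / real n)) \<longlonglongrightarrow> 0"
    using tendsto_add[OF tendsto_add[OF _ powr_2_neg_linear_tendsto_0[OF \<gamma>]]
      tendsto_mult[OF tendsto_const lim_inverse_n']] by simp
qed simp_all

lemma ereal_inverse_mult_affine_le:
  assumes "1 \<le> n" "ereal (1 / real n) * H < ereal a" "0 \<le> H" "L \<le> ereal c * H + ereal c'" "0 \<le> c"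
  shows "ereal (1 / real n) * L \<le> ereal ((c * (real n * a) + c') / real n)"
proof -
  have "H \<le> ereal (real n * a)"
    using assms(1-3) by (cases H) (auto simp: field_simps)
  then have "ereal c * H + ereal c' \<le> ereal c * ereal (real n * a) + ereal c'"
    using assms(5) by (intro add_right_mono ereal_mult_left_mono) simp_all
  then have "L \<le> ereal (c * (real n * a) + c')"
    using assms(4) by simp
  then show ?thesis by (auto dest: ereal_mult_left_mono[of _ _ "ereal (1 / real n)"])
qed

lemma limsup_binning_rate_le:
  fixes L H :: "nat \<Rightarrow> ereal" and \<tau> :: "nat \<Rightarrow> nat"
  assumes \<gamma>: "0 < \<gamma>" and a: "0 \<le> a" "a + 2 * \<gamma> < r"
    and \<tau>: "\<And>n. 1 \<le> n \<Longrightarrow> \<gamma> * real n \<le> real (\<tau> n)" "\<And>n. 1 \<le> n \<Longrightarrow> real (\<tau> n) \<le> \<gamma> * real n + 1"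
    and H: "\<And>n. 0 \<le> H n" "eventually (\<lambda>n. ereal (1 / real n) * H n < ereal a) sequentially"
    and L: "\<And>n. 1 \<le> n \<Longrightarrow> L n \<le> ereal ((real (\<tau> n) + 1) / real (\<tau> n)) * H n
              + ereal ((real (\<tau> n) + 1) / real (\<tau> n) + 2 * (real (\<tau> n) + 1))"
  shows "limsup (\<lambda>n. ereal (1 / real n) * L n) \<le> ereal r"
proof (rule Limsup_bounded)
  define B where "B n = (1 + 1 / (\<gamma> * real n)) * (a + 1 / real n) + 2 * \<gamma> + 4 / real n" for n :: nat
  have "B \<longlonglongrightarrow> a + 2 * \<gamma>" unfolding B_def using \<gamma> by real_asymp
  then have "eventually (\<lambda>n. B n < r) sequentially" using a by (intro order_tendstoD(2)) simp_all
  then show "eventually (\<lambda>n. ereal (1 / real n) * L n \<le> ereal r) sequentially"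
    using H(2) eventually_ge_at_top[of 1]
  proof eventually_elim
    case (elim n)
    then have "ereal (1 / real n) * L n \<le> ereal (((real (\<tau> n) + 1) / real (\<tau> n) * (real n * a)
        + ((real (\<tau> n) + 1) / real (\<tau> n) + 2 * (real (\<tau> n) + 1))) / real n)"
      using H(1) L[of n] by (intro ereal_inverse_mult_affine_le) simp_all
    also have "\<dots> \<le> ereal (B n)"
      unfolding B_def using elim \<gamma> \<tau>(1,2)[of n] a
      by (subst ereal_less_eq(3), intro normalized_bin_code_length_le) simp_all
    also have "\<dots> \<le> ereal r" using elim by simp
    finally show ?case .
  qed
qed

context ui_correlated_source
begin

text \<open>Codes of blocklength \<open>n\<close> are built for \<open>\<epsilon> = 1/(\<kappa> n + 2)\<close> along a diagonal sequence
  \<open>\<kappa> n \<rightarrow> \<infinity>\<close> on which \<open>Hs_eps\<close> stays below \<open>n a\<close>, with \<open>t \<approx> \<gamma> n\<close> bits per level: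
  the error is then \<open>\<le> \<epsilon> + 2\<^sup>-\<^sup>\<gamma>\<^sup>n + 2/n \<rightarrow> 0\<close> and the rate about \<open>a + 2 \<gamma>\<close>.\<close>

lemma weakly_achievable_if_SUP_Hs_rate_less:
  assumes "(SUP \<epsilon>\<in>{0<..<1}. Hs_rate P \<epsilon>) < ereal r"
  shows "weakly_achievable P r"
proof -
  define S where "S = (SUP \<epsilon>\<in>{0<..<1::real}. Hs_rate P \<epsilon>)"
  have "0 \<le> S" using Hs_rate_nonneg[of P "1/2"] unfolding S_def by (rule order_trans) (rule SUP_upper, simp)
  then obtain s where S: "S = ereal s" "0 \<le> s" "s < r"
    using assms unfolding S_def[symmetric] by (cases S) auto
  define \<gamma> where "\<gamma> = (r - s) / 4"
  define a where "a = r - 3 * \<gamma>"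
  have \<gamma>: "0 < \<gamma>" and a: "0 < a" "s < a" "a + 2 * \<gamma> < r"
    using S by (simp_all add: a_def \<gamma>_def field_simps)
  define \<epsilon> where "\<epsilon> k = 1 / (real k + 2)" for k :: nat
  have \<epsilon>: "0 < \<epsilon> k" "\<epsilon> k < 1" for k by (simp_all add: \<epsilon>_def)
  have "eventually (\<lambda>n. ereal (1 / real n) * Hs_eps P n (\<epsilon> k) < ereal a) sequentially" for k
  proof -
    have "Hs_rate P (\<epsilon> k) \<le> S" unfolding S_def using \<epsilon> by (intro SUP_upper) simp
    also have "S < ereal a" using S a by simp
    finally show ?thesis unfolding Hs_rate_def by (rule Limsup_lessD)
  qed
  then obtain \<kappa> where \<kappa>: "filterlim \<kappa> at_top sequentially"
    and small: "eventually (\<lambda>n. ereal (1 / real n) * Hs_eps P n (\<epsilon> (\<kappa> n)) < ereal a) sequentially"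
    using exists_diagonal_sequence[of "\<lambda>k n. ereal (1 / real n) * Hs_eps P n (\<epsilon> k) < ereal a"]
    by blast
  define \<tau> where "\<tau> n = nat \<lceil>\<gamma> * real n\<rceil>" for n :: nat
  have \<tau>: "1 \<le> \<tau> n" "\<gamma> * real n \<le> real (\<tau> n)" "real (\<tau> n) \<le> \<gamma> * real n + 1" if "1 \<le> n" for n
    using \<gamma> that mult_pos_pos[OF \<gamma>, of "real n"] unfolding \<tau>_def by linarith+
  have "\<exists>\<phi> \<psi>. \<forall>n. SW_code n (\<phi> n) \<and> (1 \<le> n \<longrightarrow>
      SW_error P n (\<phi> n) (\<psi> n) \<le> \<epsilon> (\<kappa> n) + (1/2) ^ \<tau> n + 2 * (1 / real n) \<and>
      SW_exp_length P n (\<phi> n) \<le> ereal ((real (\<tau> n) + 1) / real (\<tau> n)) * Hs_eps P n (\<epsilon> (\<kappa> n))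
        + ereal ((real (\<tau> n) + 1) / real (\<tau> n) + 2 * (real (\<tau> n) + 1)))"
    by (rule exists_code_sequence) (intro exists_bin_code \<epsilon> \<tau>(1); simp)
  then obtain \<phi> \<psi> where code: "\<And>n. SW_code n (\<phi> n)"
    and err: "\<And>n. 1 \<le> n \<Longrightarrow> SW_error P n (\<phi> n) (\<psi> n) \<le> \<epsilon> (\<kappa> n) + (1/2) ^ \<tau> n + 2 * (1 / real n)"
    and len: "\<And>n. 1 \<le> n \<Longrightarrow> SW_exp_length P n (\<phi> n) \<le>
      ereal ((real (\<tau> n) + 1) / real (\<tau> n)) * Hs_eps P n (\<epsilon> (\<kappa> n))
        + ereal ((real (\<tau> n) + 1) / real (\<tau> n) + 2 * (real (\<tau> n) + 1))"
    by blast
  have "(\<lambda>n. SW_error P n (\<phi> n) (\<psi> n)) \<longlonglongrightarrow> 0"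
  proof (rule tendsto_sandwich[of "\<lambda>_. 0" _ _ "\<lambda>n. \<epsilon> (\<kappa> n) + (1/2) ^ \<tau> n + 2 * (1 / real n)"])
    show "eventually (\<lambda>n. SW_error P n (\<phi> n) (\<psi> n) \<le> \<epsilon> (\<kappa> n) + (1/2) ^ \<tau> n + 2 * (1 / real n))
        sequentially"
      unfolding eventually_sequentially using err by blast
  qed (use binning_error_bound_tendsto_0[OF \<kappa> \<gamma> \<tau>(2)] in \<open>simp_all add: \<epsilon>_def SW_error_def\<close>)
  moreover have "limsup (\<lambda>n. ereal (1 / real n) * SW_exp_length P n (\<phi> n)) \<le> ereal r"
    using \<gamma> a \<tau>(2,3) small len by (intro limsup_binning_rate_le) (simp_all add: Hs_eps_def)
  ultimately show ?thesis unfolding weakly_achievable_def using code by blast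
qed

end

theorem theorem7:
  fixes P :: "nat \<Rightarrow> ('a::countable list \<times> 'b::countable list) pmf"
  assumes "general_source P"
    and "uniformly_integrable_source P"
  shows "R_SW P = Hs_bar P"
proof -
  interpret ui_correlated_source P
    using assms by unfold_locales
  let ?S = "SUP \<epsilon>\<in>{0<..<1}. Hs_rate P \<epsilon>"
  have "?S \<le> R_SW P"
    unfolding R_SW_def
    using Hs_rate_le_achievable_rate by (fastforce intro!: Inf_greatest SUP_least)
  moreover have "R_SW P \<le> ?S"
  proof (rule dense_ge)
    fix y assume "?S < y"
    then show "R_SW P \<le> y"
      using weakly_achievable_if_SUP_Hs_rate_less unfolding R_SW_def
      by (cases y) (auto intro: Inf_lower)
  qed
  ultimately show ?thesis by (simp add: Hs_bar_eq_SUP_Hs_rate)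
qed

end
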